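(* Let $(V,* )$ be a graded magmatic algebra, i.e. $V=\bigoplus_{n\ge0}V_n$ with each $V_n$ finite-dimensional and $V_n*V_m\subseteq V_{n+m}$, and assume $V_0=(0)$. Then $(T(V),\cdot,1,\Delta,\varepsilon,* )$, where $\cdot$ is concatenation, $\Delta$ the coproduct making elements of $V$ primitive, and $*$ the extension described below, is a cocommutative, connected, graded right Post-Hopf algebra for the grading of $T(V)$ by total degree of words.
   Context: Extension (known fact): $*$ extends uniquely to $T(V)\otimes T(V)\to T(V)$ such that for all $f,g,h\in T(V)$, $y\in V$ (Sweedler notation $\Delta(h)=h^{(1)}\otimes h^{(2)}$): $\varepsilon(f*g)=\varepsilon(f)\varepsilon(g)$; $\Delta(f*g)=\Delta(f)*\Delta(g)$; $f*1=f$; $1*f=\varepsilon(f)1$; $f*(gy)=(f*g)*y-f*(g*y)$; $(fg)*h=(f*h^{(1)})(g*h^{(2)})$; $(f*g)*h=f*\big((g*h^{(1)})h^{(2)}\big)$. A right Post-Hopf algebra is a Hopf algebra with a coalgebra morphism $\rhd:H\otimes H\to H$ such that $(x\cdot y)\rhd z=(x\rhd z^{(1)})\cdot(y\rhd z^{(2)})$, $(x\rhd y)\rhd z=x\rhd\big((y\rhd z^{(1)})\cdot z^{(2)}\big)$, and $\gamma_\rhd(x)(y)=y\rhd x$ is invertible in the convolution algebra $\mathrm{Hom}(H,\mathrm{End}(H))$ with product $(f\star g)(x)=f(x^{(1)})\circ g(x^{(2)})$. Graded: $H=\bigoplus H_n$ with finite-dimensional pieces, graded bialgebra, $H_n\rhd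 H_m\subseteq H_{n+m}$; connected: $\dim H_0=1$. The degree of a word of homogeneous letters is the sum of their degrees. *)

theory Defs
  imports Main
begin

text \<open>A vector with coordinates in a field, with respect to a basis indexed by
  type 'a, is a function 'a => 'k with finite support.\<close>

definition spt :: "('a \<Rightarrow> 'k::zero) \<Rightarrow> 'a set" where
  "spt f = {x. f x \<noteq> 0}"

definition fin :: "('a \<Rightarrow> 'k::zero) \<Rightarrow> bool" where
  "fin f \<longleftrightarrow> finite (spt f)"

definition lext :: "('a \<Rightarrow> 'c \<Rightarrow> 'k::comm_ring_1) \<Rightarrow> ('a \<Rightarrow> 'k) \<Rightarrow> 'c \<Rightarrow> 'k" where
  "lext h f = (\<lambda>z. \<Sum>a\<in>spt f. f a * h a z)"

definition dl :: "'a \<Rightarrow> 'a \<Rightarrow> 'k::{zero,one}" where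
  "dl a = (\<lambda>x. if x = a then 1 else 0)"

definition tens :: "('a \<Rightarrow> 'k::times) \<Rightarrow> ('c \<Rightarrow> 'k) \<Rightarrow> ('a \<times> 'c \<Rightarrow> 'k)" where
  "tens f g = (\<lambda>(x, y). f x * g y)"

text \<open>V has a homogeneous basis indexed by 'b; T(V) has the basis of words
  ('b list); T(V) tensor T(V) has the basis of pairs of words.\<close>

definition tv_mult :: "('b list \<Rightarrow> 'k::field) \<Rightarrow> ('b list \<Rightarrow> 'k) \<Rightarrow> 'b list \<Rightarrow> 'k" where
  "tv_mult f g = lext (\<lambda>(u, v). dl (u @ v)) (tens f g)"

definition tv_unit :: "'b list \<Rightarrow> 'k::field" where
  "tv_unit = dl []"

text \<open>Deshuffle coproduct (letters primitive): coefficient of u (x) v in Delta(w).\<close>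
definition tv_cop_w :: "'b list \<Rightarrow> 'b list \<times> 'b list \<Rightarrow> 'k::field" where
  "tv_cop_w w = (\<lambda>(u, v). of_nat (card {S. S \<subseteq> {..<length w} \<and> nths w S = u
                                   \<and> nths w ({..<length w} - S) = v}))"

definition tv_cop :: "('b list \<Rightarrow> 'k::field) \<Rightarrow> 'b list \<times> 'b list \<Rightarrow> 'k" where
  "tv_cop f = lext tv_cop_w f"

definition tv_eps :: "('b list \<Rightarrow> 'k::field) \<Rightarrow> 'k" where
  "tv_eps f = f []"

definition tv_mult2 :: "('b list \<times> 'b list \<Rightarrow> 'k::field) \<Rightarrow> ('b list \<times> 'b list \<Rightarrow> 'k)
    \<Rightarrow> 'b list \<times> 'b list \<Rightarrow> 'k" where
  "tv_mult2 F G = lext (\<lambda>((a, b), (c, d)). dl (a @ c, b @ d)) (tens F G)"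

text \<open>m x y is the coordinate vector of x * y for basis elements x, y of V.
  tv_wl m u y is the word u acted on by the letter y:
  (x1...xn) * y = sum_i x1...(xi*y)...xn  (from (fg)*h = (f*h1)(g*h2) and f*1 = f).\<close>
definition tv_wl :: "('b \<Rightarrow> 'b \<Rightarrow> 'b \<Rightarrow> 'k::field) \<Rightarrow> 'b list \<Rightarrow> 'b \<Rightarrow> 'b list \<Rightarrow> 'k" where
  "tv_wl m u y = (\<lambda>w. \<Sum>i<length u.
      if length w = length u \<and> take i w = take i u \<and> drop (Suc i) w = drop (Suc i) u
      then m (u ! i) y (w ! i) else 0)"

text \<open>u * w for words, by recursion on the length n of w, using
  f * 1 = f and f * (g y) = (f * g) * y - f * (g * y).\<close>
primrec tv_W :: "('b \<Rightarrow> 'b \<Rightarrow> 'b \<Rightarrow> 'k::field) \<Rightarrow> nat \<Rightarrow> 'b list \<Rightarrow> 'b list \<Rightarrow> 'b list \<Rightarrow> 'k" where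
  "tv_W m 0 u w = dl u"
| "tv_W m (Suc n) u w =
     (if w = [] then dl u
      else (\<lambda>z. lext (\<lambda>v. tv_wl m v (last w)) (tv_W m n u (butlast w)) z
              - lext (\<lambda>v. tv_W m n u v) (tv_wl m (butlast w) (last w)) z))"

definition tv_wstar :: "('b \<Rightarrow> 'b \<Rightarrow> 'b \<Rightarrow> 'k::field) \<Rightarrow> 'b list \<Rightarrow> 'b list \<Rightarrow> 'b list \<Rightarrow> 'k" where
  "tv_wstar m u w = tv_W m (length w) u w"

definition tv_star :: "('b \<Rightarrow> 'b \<Rightarrow> 'b \<Rightarrow> 'k::field) \<Rightarrow> ('b list \<Rightarrow> 'k) \<Rightarrow> ('b list \<Rightarrow> 'k)
    \<Rightarrow> 'b list \<Rightarrow> 'k" where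
  "tv_star m f g = lext (\<lambda>(u, w). tv_wstar m u w) (tens f g)"

definition tv_star2 :: "('b \<Rightarrow> 'b \<Rightarrow> 'b \<Rightarrow> 'k::field) \<Rightarrow> ('b list \<times> 'b list \<Rightarrow> 'k)
    \<Rightarrow> ('b list \<times> 'b list \<Rightarrow> 'k) \<Rightarrow> 'b list \<times> 'b list \<Rightarrow> 'k" where
  "tv_star2 m F G = lext (\<lambda>((a, b), (c, d)). tens (tv_wstar m a c) (tv_wstar m b d)) (tens F G)"

definition tv_hopf :: "'b itself \<Rightarrow> 'k::field itself \<Rightarrow> bool" where
  "tv_hopf B K \<longleftrightarrow>
    (\<forall>f g :: 'b list \<Rightarrow> 'k. fin f \<and> fin g \<longrightarrow> fin (tv_mult f g) \<and> fin (tv_cop f)) \<and>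
    (\<forall>f g h :: 'b list \<Rightarrow> 'k. fin f \<and> fin g \<and> fin h \<longrightarrow>
        tv_mult (tv_mult f g) h = tv_mult f (tv_mult g h)) \<and>
    (\<forall>f :: 'b list \<Rightarrow> 'k. fin f \<longrightarrow> tv_mult tv_unit f = f \<and> tv_mult f tv_unit = f) \<and>
    (\<forall>f :: 'b list \<Rightarrow> 'k. fin f \<longrightarrow>
        lext (\<lambda>(a, b). tens (tv_cop_w a) (dl b)) (tv_cop f)
        = lext (\<lambda>(a, b). lext (\<lambda>(c, d). dl ((a, c), d)) (tv_cop_w b)) (tv_cop f)) \<and>
    (\<forall>f :: 'b list \<Rightarrow> 'k. fin f \<longrightarrow>
        lext (\<lambda>(a, b). (\<lambda>x. tv_eps (dl a :: 'b list \<Rightarrow> 'k) * dl b x)) (tv_cop f) = f \<and>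
        lext (\<lambda>(a, b). (\<lambda>x. dl a x * tv_eps (dl b :: 'b list \<Rightarrow> 'k))) (tv_cop f) = f) \<and>
    (\<forall>f g :: 'b list \<Rightarrow> 'k. fin f \<and> fin g \<longrightarrow>
        tv_cop (tv_mult f g) = tv_mult2 (tv_cop f) (tv_cop g) \<and>
        tv_eps (tv_mult f g) = tv_eps f * tv_eps g) \<and>
    tv_cop (tv_unit :: 'b list \<Rightarrow> 'k) = dl ([], []) \<and>
    tv_eps (tv_unit :: 'b list \<Rightarrow> 'k) = 1 \<and>
    (\<exists>s :: 'b list \<Rightarrow> 'b list \<Rightarrow> 'k. (\<forall>w. fin (s w)) \<and>
        (\<forall>f. fin f \<longrightarrow>
          lext (\<lambda>(a, b). tv_mult (s a) (dl b)) (tv_cop f) = (\<lambda>x. tv_eps f * tv_unit x) \<and>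
          lext (\<lambda>(a, b). tv_mult (dl a) (s b)) (tv_cop f) = (\<lambda>x. tv_eps f * tv_unit x)))"

text \<open>Right Post-Hopf algebra (T(V), concatenation, 1, Delta, eps, star).
  The convolution inverse beta of gamma is an element of Hom(H, End H),
  given by its values bt w v = beta(w)(v) on basis words.\<close>
definition tv_right_post_hopf :: "('b \<Rightarrow> 'b \<Rightarrow> 'b \<Rightarrow> 'k::field) \<Rightarrow> bool" where
  "tv_right_post_hopf m \<longleftrightarrow>
    tv_hopf TYPE('b) TYPE('k) \<and>
    (\<forall>f g. fin f \<and> fin g \<longrightarrow>
        fin (tv_star m f g) \<and>
        tv_cop (tv_star m f g) = tv_star2 m (tv_cop f) (tv_cop g) \<and>
        tv_eps (tv_star m f g) = tv_eps f * tv_eps g) \<and>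
    (\<forall>f g h. fin f \<and> fin g \<and> fin h \<longrightarrow>
        tv_star m (tv_mult f g) h
        = lext (\<lambda>(a, b). tv_mult (tv_star m f (dl a)) (tv_star m g (dl b))) (tv_cop h)) \<and>
    (\<forall>f g h. fin f \<and> fin g \<and> fin h \<longrightarrow>
        tv_star m (tv_star m f g) h
        = tv_star m f (lext (\<lambda>(a, b). tv_mult (tv_star m g (dl a)) (dl b)) (tv_cop h))) \<and>
    (\<exists>bt :: 'b list \<Rightarrow> 'b list \<Rightarrow> 'b list \<Rightarrow> 'k. (\<forall>w v. fin (bt w v)) \<and>
        (\<forall>x y. fin x \<and> fin y \<longrightarrow>
          lext (\<lambda>(a, b). tv_star m (lext (bt b) y) (dl a)) (tv_cop x) = (\<lambda>z. tv_eps x * y z) \<and>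
          lext (\<lambda>(a, b). lext (bt a) (tv_star m y (dl b))) (tv_cop x) = (\<lambda>z. tv_eps x * y z)))"

definition tv_cocommutative :: "'b itself \<Rightarrow> 'k::field itself \<Rightarrow> bool" where
  "tv_cocommutative B K \<longleftrightarrow>
    (\<forall>f :: 'b list \<Rightarrow> 'k. fin f \<longrightarrow> (\<forall>u v. tv_cop f (u, v) = tv_cop f (v, u)))"

definition wdeg :: "('b \<Rightarrow> nat) \<Rightarrow> 'b list \<Rightarrow> nat" where
  "wdeg deg w = sum_list (map deg w)"

definition tv_grade :: "('b \<Rightarrow> nat) \<Rightarrow> nat \<Rightarrow> ('b list \<Rightarrow> 'k::field) set" where
  "tv_grade deg n = {f. fin f \<and> (\<forall>w. f w \<noteq> 0 \<longrightarrow> wdeg deg w = n)}"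

definition tv_connected_graded :: "('b \<Rightarrow> nat) \<Rightarrow> ('b \<Rightarrow> 'b \<Rightarrow> 'b \<Rightarrow> 'k::field) \<Rightarrow> bool" where
  "tv_connected_graded deg m \<longleftrightarrow>
    (\<forall>n. finite {w. wdeg deg w = n}) \<and>
    (\<forall>f g n k. f \<in> tv_grade deg n \<and> g \<in> tv_grade deg k \<longrightarrow>
        tv_mult f g \<in> tv_grade deg (n + k) \<and> tv_star m f g \<in> tv_grade deg (n + k)) \<and>
    (tv_unit :: 'b list \<Rightarrow> 'k) \<in> tv_grade deg 0 \<and>
    (\<forall>(f :: 'b list \<Rightarrow> 'k) n. f \<in> tv_grade deg n \<longrightarrow>
        (\<forall>u v. tv_cop f (u, v) \<noteq> 0 \<longrightarrow> wdeg deg u + wdeg deg v = n) \<and>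
        (n \<noteq> 0 \<longrightarrow> tv_eps f = 0)) \<and>
    (\<forall>f :: 'b list \<Rightarrow> 'k. f \<in> tv_grade deg 0 \<longrightarrow> f = (\<lambda>x. f [] * tv_unit x))"

end

theory Submission
  imports Defs "HOL-Library.Function_Algebras"
begin

text \<open>
  Elements of T(V) and of T(V) \<otimes> T(V) are finitely supported coordinate functions on words and
  on pairs of words, and every structure map is the (bi)linear extension of its values on basis
  words, so each identity reduces to an identity between words.  The coalgebra axioms are then
  combinatorics of deshuffles, and (-1)^|w| rev w is the antipode.

  The recursion f * (g y) = (f * g) * y - f * (g * y) says that right multiplication by a letter y
  is the map f \<mapsto> f * y, which on T(V) is the derivation of concatenation extending
  v \<mapsto> v * y on V, and this derivation commutes with the coproduct.  Compatibility of * with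
  the coproduct and the counit, and the two Post-Hopf identities, therefore follow by induction on
  the length of the right-hand word: both sides satisfy the same recursion.  The convolution inverse
  of \<gamma> is built by recursion on the length of words from either side, and the two candidates
  agree by associativity of convolution.  Finally V_0 = 0 makes every homogeneous component
  finite-dimensional and T(V)_0 = K.
\<close>

definition scale_vec :: "'k::field \<Rightarrow> ('c \<Rightarrow> 'k) \<Rightarrow> 'c \<Rightarrow> 'k" where
  "scale_vec c f = (\<lambda>z. c * f z)"

lemma sum_fun_apply: "(\<Sum>a\<in>A. g a) z = (\<Sum>a\<in>A. g a z)"
  by (induction A rule: infinite_finite_induct) auto

lemma scale_vec_apply[simp]: "scale_vec c f z = c * f z" by (simp add: scale_vec_def)

lemma scale_vec_sum: "scale_vec c (\<Sum>i\<in>I. g i) = (\<Sum>i\<in>I. scale_vec c (g i))"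
  by (rule ext) (simp add: sum_fun_apply sum_distrib_left)

lemma scale_vec_sum_scalars: "scale_vec (\<Sum>i\<in>I. c i) g = (\<Sum>i\<in>I. scale_vec (c i) g)"
  by (rule ext) (simp add: sum_fun_apply sum_distrib_right)

lemma scale_vec_one[simp]: "scale_vec 1 f = f" by (simp add: scale_vec_def)

lemma scale_vec_scale_vec: "scale_vec c (scale_vec d f) = scale_vec (c * d) f"
  by (rule ext) (simp add: mult.assoc)

lemma scale_vec_minus_one_add: "scale_vec (-1) f + f = 0"
  by (rule ext) simp

lemma add_scale_vec_minus_one: "f + scale_vec (-1) f = 0"
  by (rule ext) simp

lemma fin_zero[simp]: "fin (0::'a\<Rightarrow>'k::zero)" by (simp add: fin_def spt_def)

lemma spt_dl: "spt (dl a :: 'a \<Rightarrow> 'k::zero_neq_one) = {a}"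
  by (auto simp: spt_def dl_def)

lemma fin_dl[simp]: "fin (dl a :: 'a \<Rightarrow> 'k::zero_neq_one)"
  by (simp add: fin_def spt_dl)

lemma fin_subset: "fin f \<Longrightarrow> spt g \<subseteq> spt f \<Longrightarrow> fin g"
  by (auto simp: fin_def intro: finite_subset)

lemma fin_add[simp]: "fin f \<Longrightarrow> fin g \<Longrightarrow> fin (f + (g::'a\<Rightarrow>'k::comm_monoid_add))"
  unfolding fin_def by (rule finite_subset[of _ "spt f \<union> spt g"]) (auto simp: spt_def)

lemma fin_uminus[simp]: "fin (- (f::'a\<Rightarrow>'k::ab_group_add)) = fin f"
  by (simp add: fin_def spt_def)

lemma fin_diff[simp]: "fin f \<Longrightarrow> fin g \<Longrightarrow> fin (f - (g::'a\<Rightarrow>'k::ab_group_add))"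
  unfolding fin_def by (rule finite_subset[of _ "spt f \<union> spt g"]) (auto simp: spt_def)

lemma fin_scale_vec[simp]: "fin f \<Longrightarrow> fin (scale_vec c (f::'a\<Rightarrow>'k::field))"
  by (erule fin_subset) (auto simp: spt_def)

lemma fin_sum[simp]: "(\<And>a. a \<in> A \<Longrightarrow> fin (g a)) \<Longrightarrow> fin (\<Sum>a\<in>A. (g a::'c\<Rightarrow>'k::field))"
  by (induction A rule: infinite_finite_induct) auto

lemma spt_diffD: "z \<in> spt (f - g) \<Longrightarrow> z \<in> spt f \<or> z \<in> spt (g :: _ \<Rightarrow> 'k::ab_group_add)"
  by (auto simp: spt_def)

lemma lext_eq_sum:
  assumes "finite A" "spt f \<subseteq> A"
  shows "lext h f = (\<Sum>a\<in>A. scale_vec (f a) (h a))"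
proof
  fix z
  have "lext h f z = (\<Sum>a\<in>spt f. f a * h a z)" by (simp add: lext_def)
  also have "\<dots> = (\<Sum>a\<in>A. f a * h a z)"
    by (rule sum.mono_neutral_left) (use assms in \<open>auto simp: spt_def\<close>)
  finally show "lext h f z = (\<Sum>a\<in>A. scale_vec (f a) (h a)) z" by (simp add: sum_fun_apply)
qed

lemma lext_spt: "fin f \<Longrightarrow> lext h f = (\<Sum>a\<in>spt f. scale_vec (f a) (h a))"
  by (rule lext_eq_sum) (auto simp: fin_def)

lemma fin_lext[simp]: "fin f \<Longrightarrow> (\<And>a. fin (h a)) \<Longrightarrow> fin (lext h (f::'a\<Rightarrow>'k::field))"
  by (simp add: lext_spt)

lemma lext_cong: "(\<And>a. a \<in> spt f \<Longrightarrow> h a = h' a) \<Longrightarrow> lext h f = lext h' f"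
  by (simp add: lext_def)

lemma lext_dl[simp]: "lext h (dl a :: 'a \<Rightarrow> 'k::field) = h a"
  by (rule ext) (simp only: lext_def spt_dl, simp add: dl_def)

lemma lext_zero[simp]: "lext h 0 = 0"
  by (rule ext) (simp add: lext_def spt_def)

lemma lext_zero_fun[simp]: "lext (\<lambda>a. 0) f = 0"
  by (rule ext) (simp add: lext_def)

lemma lext_eq_sum_pt:
  fixes f :: "'a \<Rightarrow> 'k::field"
  assumes "finite A" "spt f \<subseteq> A"
  shows "lext h f z = (\<Sum>a\<in>A. f a * h a z)"
  using lext_eq_sum[OF assms, of h] by (simp add: sum_fun_apply)

lemma lext_add: "fin f \<Longrightarrow> fin g \<Longrightarrow> lext h (f + g) = lext h f + lext h (g::'a\<Rightarrow>'k::field)"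
proof (rule ext)
  fix z assume a: "fin f" "fin g"
  let ?A = "spt f \<union> spt g"
  have fA: "finite ?A" using a by (auto simp: fin_def)
  have s: "spt f \<subseteq> ?A" "spt g \<subseteq> ?A" "spt (f+g) \<subseteq> ?A" by (auto simp: spt_def)
  show "lext h (f + g) z = (lext h f + lext h g) z"
    by (simp add: lext_eq_sum_pt[OF fA s(1)] lext_eq_sum_pt[OF fA s(2)] lext_eq_sum_pt[OF fA s(3)]
        sum.distrib[symmetric] distrib_right)
qed

lemma lext_scale_vec: "lext h (scale_vec c f) = scale_vec c (lext h (f::'a\<Rightarrow>'k::field))"
proof (cases "c = 0")
  case True thus ?thesis by (simp add: scale_vec_def lext_def spt_def)
next
  case False
  hence "spt (scale_vec c f) = spt f" by (auto simp: spt_def)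
  thus ?thesis by (auto simp: lext_def sum_distrib_left mult.assoc)
qed

lemma lext_uminus: "lext h (- f) = - lext h (f::'a\<Rightarrow>'k::field)"
  using lext_scale_vec[of h "-1" f] by (simp add: scale_vec_def fun_Compl_def)

lemma lext_diff: "fin f \<Longrightarrow> fin g \<Longrightarrow> lext h (f - g) = lext h f - lext h (g::'a\<Rightarrow>'k::field)"
  using lext_add[of f "-g" h] by (simp add: lext_uminus)

lemma lext_add_fun: "lext (\<lambda>a. h1 a + h2 a) f = lext h1 f + lext h2 f"
  by (rule ext) (simp add: lext_def sum.distrib distrib_left)

lemma lext_diff_fun: "lext (\<lambda>a. h1 a - h2 a) f = lext h1 f - lext h2 f"
  by (rule ext) (simp add: lext_def sum_subtractf right_diff_distrib)

lemma lext_sum_fun: "lext (\<lambda>a. \<Sum>i\<in>I. h i a) f = (\<Sum>i\<in>I. lext (h i) f)"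
proof (rule ext)
  fix z
  have "lext (\<lambda>a. \<Sum>i\<in>I. h i a) f z = (\<Sum>a\<in>spt f. \<Sum>i\<in>I. f a * h i a z)"
    by (simp add: lext_def sum_fun_apply sum_distrib_left)
  also have "\<dots> = (\<Sum>i\<in>I. \<Sum>a\<in>spt f. f a * h i a z)" by (rule sum.swap)
  finally show "lext (\<lambda>a. \<Sum>i\<in>I. h i a) f z = (\<Sum>i\<in>I. lext (h i) f) z"
    by (simp add: lext_def sum_fun_apply)
qed

lemma lext_sum: "(\<And>i. i \<in> I \<Longrightarrow> fin (g i)) \<Longrightarrow> lext h (\<Sum>i\<in>I. g i) = (\<Sum>i\<in>I. lext h (g i :: 'a \<Rightarrow> 'k::field))"
  by (induction I rule: infinite_finite_induct) (auto simp: lext_add)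

lemma lext_comp:
  fixes f :: "'a \<Rightarrow> 'k::field"
  assumes "fin f" "\<And>a. fin (g a)"
  shows "lext h (lext g f) = lext (\<lambda>a. lext h (g a)) f"
proof -
  have "lext h (lext g f) = lext h (\<Sum>a\<in>spt f. scale_vec (f a) (g a))" by (simp add: lext_spt assms)
  also have "\<dots> = (\<Sum>a\<in>spt f. lext h (scale_vec (f a) (g a)))"
    by (rule lext_sum) (simp add: assms)
  also have "\<dots> = (\<Sum>a\<in>spt f. scale_vec (f a) (lext h (g a)))"
    by (simp only: lext_scale_vec)
  also have "\<dots> = lext (\<lambda>a. lext h (g a)) f" by (simp add: lext_spt assms)
  finally show ?thesis .
qed

lemma lext_dl_id: "fin f \<Longrightarrow> lext dl f = (f :: 'a \<Rightarrow> 'k::field)"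
proof (rule ext)
  fix z assume "fin f"
  have "lext dl f z = (\<Sum>a\<in>spt f. f a * dl a z)" by (simp add: lext_def)
  also have "\<dots> = (\<Sum>a\<in>spt f. if a = z then f a else 0)"
    by (rule sum.cong) (auto simp: dl_def)
  also have "\<dots> = f z" using \<open>fin f\<close> by (auto simp: fin_def spt_def)
  finally show "lext dl f z = f z" .
qed

lemma lext_swap:
  fixes f :: "'a \<Rightarrow> 'k::field" and g :: "'b \<Rightarrow> 'k"
  assumes "fin f" "fin g"
  shows "lext (\<lambda>u. lext (\<lambda>v. H u v) g) f = lext (\<lambda>v. lext (\<lambda>u. H u v) f) g"
proof (rule ext)
  fix z
  show "lext (\<lambda>u. lext (\<lambda>v. H u v) g) f z = lext (\<lambda>v. lext (\<lambda>u. H u v) f) g z"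
  proof -
    have "lext (\<lambda>u. lext (\<lambda>v. H u v) g) f z = (\<Sum>u\<in>spt f. \<Sum>v\<in>spt g. f u * (g v * H u v z))"
      by (simp add: lext_def sum_distrib_left)
    also have "\<dots> = (\<Sum>v\<in>spt g. \<Sum>u\<in>spt f. f u * (g v * H u v z))" by (rule sum.swap)
    also have "\<dots> = lext (\<lambda>v. lext (\<lambda>u. H u v) f) g z"
      by (simp add: lext_def sum_distrib_left mult.left_commute)
    finally show ?thesis .
  qed
qed

lemma fin_lext_on_spt: "fin f \<Longrightarrow> (\<And>a. a \<in> spt f \<Longrightarrow> fin (h a)) \<Longrightarrow> fin (lext h (f::'a\<Rightarrow>'k::field))"
  by (simp add: lext_spt)

lemma spt_lextD: "z \<in> spt (lext h f) \<Longrightarrow> \<exists>a\<in>spt f. z \<in> spt (h a)"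
proof -
  assume "z \<in> spt (lext h f)"
  hence "(\<Sum>a\<in>spt f. f a * h a z) \<noteq> 0" by (simp add: spt_def lext_def)
  then obtain a where "a \<in> spt f" "f a * h a z \<noteq> 0"
    using sum.neutral[of "spt f" "\<lambda>a. f a * h a z"] by blast
  thus ?thesis by (auto simp: spt_def)
qed

lemma sum_spt_delta:
  fixes f :: "'a \<Rightarrow> 'k::field"
  assumes "fin f"
  shows "(\<Sum>v\<in>spt f. f v * (if v = a then c else 0)) = f a * c"
proof -
  have "(\<Sum>v\<in>spt f. f v * (if v = a then c else 0)) = (\<Sum>v\<in>spt f. if v = a then f a * c else 0)"
    by (rule sum.cong) auto
  also have "\<dots> = f a * c" using assms by (auto simp: fin_def spt_def)
  finally show ?thesis .
qed

lemma spt_tens: "spt (tens f g) = spt f \<times> spt (g :: 'b \<Rightarrow> 'k::field)"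
  by (auto simp: spt_def tens_def)

lemma fin_tens[simp]: "fin f \<Longrightarrow> fin g \<Longrightarrow> fin (tens f (g :: 'b \<Rightarrow> 'k::field))"
  by (simp add: fin_def spt_tens)

lemma lext_tens:
  fixes f :: "'a \<Rightarrow> 'k::field" and g :: "'b \<Rightarrow> 'k"
  assumes "fin f" "fin g"
  shows "lext h (tens f g) = lext (\<lambda>u. lext (\<lambda>v. h (u,v)) g) f"
proof (rule ext)
  fix z
  show "lext h (tens f g) z = lext (\<lambda>u. lext (\<lambda>v. h (u,v)) g) f z"
  proof -
    have "lext h (tens f g) z = (\<Sum>p\<in>spt f \<times> spt g. tens f g p * h p z)"
      by (simp only: lext_def spt_tens)
    also have "\<dots> = (\<Sum>u\<in>spt f. \<Sum>v\<in>spt g. f u * (g v * h (u,v) z))"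
      by (simp add: sum.cartesian_product tens_def mult.assoc split_def)
    also have "\<dots> = lext (\<lambda>u. lext (\<lambda>v. h (u,v)) g) f z"
      by (simp add: lext_def sum_distrib_left)
    finally show ?thesis .
  qed
qed

lemma lext_tens_tens:
  fixes f :: "'a \<Rightarrow> 'k::field" and g :: "'b \<Rightarrow> 'k" and h :: "'c \<Rightarrow> 'k" and k :: "'d \<Rightarrow> 'k"
  assumes f: "fin f" and g: "fin g" and h: "fin h" and k: "fin k"
  shows "lext (\<lambda>((a, b), (c, d)). tens (B1 a c) (B2 b d)) (tens (tens f g) (tens h k))
       = tens (lext (\<lambda>(a, c). B1 a c) (tens f h)) (lext (\<lambda>(b, d). B2 b d) (tens g k))"
proof (rule ext, clarify)
  fix x y
  have "lext (\<lambda>((a, b), (c, d)). tens (B1 a c) (B2 b d)) (tens (tens f g) (tens h k)) (x, y)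
      = (\<Sum>a\<in>spt f. \<Sum>b\<in>spt g. \<Sum>c\<in>spt h. \<Sum>d\<in>spt k. (f a * h c * B1 a c x) * (g b * k d * B2 b d y))"
    by (simp add: lext_tens f g h k) (simp add: lext_def tens_def sum_distrib_left mult_ac)
  also have "\<dots> = (\<Sum>a\<in>spt f. \<Sum>c\<in>spt h. \<Sum>b\<in>spt g. \<Sum>d\<in>spt k. (f a * h c * B1 a c x) * (g b * k d * B2 b d y))"
    by (rule sum.cong[OF refl]) (rule sum.swap)
  also have "\<dots> = (\<Sum>a\<in>spt f. \<Sum>c\<in>spt h. f a * h c * B1 a c x) * (\<Sum>b\<in>spt g. \<Sum>d\<in>spt k. g b * k d * B2 b d y)"
    by (simp only: sum_distrib_right) (simp only: sum_distrib_left)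
  also have "\<dots> = tens (lext (\<lambda>(a, c). B1 a c) (tens f h)) (lext (\<lambda>(b, d). B2 b d) (tens g k)) (x, y)"
    by (simp add: lext_tens f g h k) (simp add: lext_def tens_def sum_distrib_left mult_ac)
  finally show "lext (\<lambda>((a, b), (c, d)). tens (B1 a c) (B2 b d)) (tens (tens f g) (tens h k)) (x, y)
      = tens (lext (\<lambda>(a, c). B1 a c) (tens f h)) (lext (\<lambda>(b, d). B2 b d) (tens g k)) (x, y)" .
qed

lemma tens_dl[simp]: "tens (dl u) (dl v) = (dl (u, v) :: _ \<Rightarrow> 'k::field)"
  by (rule ext) (clarsimp simp: tens_def dl_def split: prod.splits)

definition fs_linear :: "(('a \<Rightarrow> 'k::field) \<Rightarrow> ('c \<Rightarrow> 'k)) \<Rightarrow> bool" where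
  "fs_linear L \<longleftrightarrow> (\<forall>f. fin f \<longrightarrow> L f = lext (\<lambda>a. L (dl a)) f)"

lemma fs_linearD: "fs_linear L \<Longrightarrow> fin f \<Longrightarrow> L f = lext (\<lambda>a. L (dl a)) f"
  unfolding fs_linear_def by blast

lemma fs_linear_lext[simp]: "fs_linear (\<lambda>f. lext h f)"
  unfolding fs_linear_def lext_dl by simp

lemma fs_linear_eq_on_basis:
  assumes "fs_linear L1" "fs_linear L2" "fin f" "\<And>a. a \<in> spt f \<Longrightarrow> L1 (dl a) = L2 (dl a)"
  shows "L1 f = L2 f"
  unfolding fs_linearD[OF assms(1,3)] fs_linearD[OF assms(2,3)] by (rule lext_cong) (rule assms(4))

lemma fin_fs_linear: "fs_linear L \<Longrightarrow> fin f \<Longrightarrow> (\<And>a. fin (L (dl a))) \<Longrightarrow> fin (L f)"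
proof -
  assume a: "fs_linear L" "fin f" "\<And>a. fin (L (dl a))"
  have "L f = lext (\<lambda>a. L (dl a)) f" by (rule fs_linearD[OF a(1,2)])
  thus ?thesis using a(2,3) by simp
qed

lemma fs_linear_comp:
  fixes L2 :: "('a \<Rightarrow> 'k::field) \<Rightarrow> ('b \<Rightarrow> 'k)" and L1 :: "('b \<Rightarrow> 'k) \<Rightarrow> ('c \<Rightarrow> 'k)"
  assumes "fs_linear L1" "fs_linear L2" "\<And>a. fin (L2 (dl a))"
  shows "fs_linear (\<lambda>f. L1 (L2 f))"
  unfolding fs_linear_def
proof (intro allI impI)
  fix f :: "'a \<Rightarrow> 'k" assume f: "fin f"
  have e2: "L2 f = lext (\<lambda>a. L2 (dl a)) f" by (rule fs_linearD[OF assms(2) f])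
  have "L1 (L2 f) = lext (\<lambda>b. L1 (dl b)) (L2 f)"
    by (rule fs_linearD[OF assms(1)]) (rule fin_fs_linear[OF assms(2) f assms(3)])
  also have "\<dots> = lext (\<lambda>b. L1 (dl b)) (lext (\<lambda>a. L2 (dl a)) f)" by (simp only: e2)
  also have "\<dots> = lext (\<lambda>a. lext (\<lambda>b. L1 (dl b)) (L2 (dl a))) f"
    by (rule lext_comp[OF f assms(3)])
  also have "\<dots> = lext (\<lambda>a. L1 (L2 (dl a))) f"
    by (rule lext_cong) (rule sym, rule fs_linearD[OF assms(1) assms(3)])
  finally show "L1 (L2 f) = lext (\<lambda>a. L1 (L2 (dl a))) f" .
qed

lemma fs_linear_add:
  fixes L1 L2 :: "('a \<Rightarrow> 'k::field) \<Rightarrow> ('c \<Rightarrow> 'k)"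
  assumes "fs_linear L1" "fs_linear L2" shows "fs_linear (\<lambda>f. L1 f + L2 f)"
  unfolding fs_linear_def
proof (intro allI impI)
  fix f :: "'a \<Rightarrow> 'k" assume f: "fin f"
  show "L1 f + L2 f = lext (\<lambda>a. L1 (dl a) + L2 (dl a)) f"
    by (simp only: lext_add_fun fs_linearD[OF assms(1) f] fs_linearD[OF assms(2) f])
qed

lemma fs_linear_diff:
  fixes L1 L2 :: "('a \<Rightarrow> 'k::field) \<Rightarrow> ('c \<Rightarrow> 'k)"
  assumes "fs_linear L1" "fs_linear L2" shows "fs_linear (\<lambda>f. L1 f - L2 f)"
  unfolding fs_linear_def
proof (intro allI impI)
  fix f :: "'a \<Rightarrow> 'k" assume f: "fin f"
  show "L1 f - L2 f = lext (\<lambda>a. L1 (dl a) - L2 (dl a)) f"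
    by (simp only: lext_diff_fun fs_linearD[OF assms(1) f] fs_linearD[OF assms(2) f])
qed

lemma fs_linear_sum:
  fixes L :: "'i \<Rightarrow> ('a \<Rightarrow> 'k::field) \<Rightarrow> ('c \<Rightarrow> 'k)"
  assumes l: "\<And>i. i \<in> I \<Longrightarrow> fs_linear (L i)"
  shows "fs_linear (\<lambda>f. \<Sum>i\<in>I. L i f)"
  unfolding fs_linear_def
proof (intro allI impI)
  fix f :: "'a \<Rightarrow> 'k" assume f: "fin f"
  have "(\<Sum>i\<in>I. L i f) = (\<Sum>i\<in>I. lext (\<lambda>a. L i (dl a)) f)"
    by (rule sum.cong) (simp_all only: fs_linearD[OF l f])
  thus "(\<Sum>i\<in>I. L i f) = lext (\<lambda>a. \<Sum>i\<in>I. L i (dl a)) f" by (simp only: lext_sum_fun)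
qed

lemma fs_linear_zero: "fs_linear (\<lambda>f. 0)"
  by (simp add: fs_linear_def)

lemma fs_linear_id: "fs_linear (\<lambda>f. f)"
  by (simp add: fs_linear_def lext_dl_id)

lemma fs_linear_addD: "fs_linear L \<Longrightarrow> fin f \<Longrightarrow> fin g \<Longrightarrow> L (f + g) = L f + L g"
  by (simp add: fs_linearD[of L "f+g"] fs_linearD[of L f] fs_linearD[of L g] lext_add)

lemma fs_linear_diffD: "fs_linear L \<Longrightarrow> fin f \<Longrightarrow> fin g \<Longrightarrow> L (f - g) = L f - L g"
  by (simp add: fs_linearD[of L "f-g"] fs_linearD[of L f] fs_linearD[of L g] lext_diff)

lemma fs_linear_scale_vecD: "fs_linear L \<Longrightarrow> fin f \<Longrightarrow> L (scale_vec c f) = scale_vec c (L f)"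
  by (simp add: fs_linearD[of L "scale_vec c f"] fs_linearD[of L f] lext_scale_vec)

lemma fs_linear_zeroD: "fs_linear L \<Longrightarrow> L 0 = 0"
  by (simp add: fs_linearD[of L 0])

lemma fs_linear_sumD: "fs_linear L \<Longrightarrow> (\<And>i. i \<in> I \<Longrightarrow> fin (g i)) \<Longrightarrow> L (\<Sum>i\<in>I. g i) = (\<Sum>i\<in>I. L (g i))"
  by (simp add: fs_linearD[of L "sum g I"] fs_linearD[of L "g _"] lext_sum)

lemma fs_linear_lext_tens_left:
  fixes g :: "'b \<Rightarrow> 'k::field"
  assumes "fin g" shows "fs_linear (\<lambda>f :: 'a \<Rightarrow> 'k. lext H (tens f g))"
  unfolding fs_linear_def
proof (intro allI impI)
  fix f :: "'a \<Rightarrow> 'k" assume f: "fin f"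
  show "lext H (tens f g) = lext (\<lambda>a. lext H (tens (dl a) g)) f"
    by (simp only: lext_tens[OF f assms] lext_tens[OF fin_dl assms] lext_dl)
qed

lemma fs_linear_lext_tens_right:
  fixes f :: "'a \<Rightarrow> 'k::field"
  assumes "fin f" shows "fs_linear (\<lambda>g :: 'b \<Rightarrow> 'k. lext H (tens f g))"
  unfolding fs_linear_def
proof (intro allI impI)
  fix g :: "'b \<Rightarrow> 'k" assume g: "fin g"
  have "lext H (tens f g) = lext (\<lambda>u. lext (\<lambda>v. H (u, v)) g) f"
    by (rule lext_tens[OF assms g])
  also have "\<dots> = lext (\<lambda>v. lext (\<lambda>u. H (u, v)) f) g"
    by (rule lext_swap[OF assms g])
  also have "\<dots> = lext (\<lambda>a. lext H (tens f (dl a))) g"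
    by (simp only: lext_tens[OF assms fin_dl] lext_dl)
  finally show "lext H (tens f g) = lext (\<lambda>a. lext H (tens f (dl a))) g" .
qed

lemma tens_linear_left:
  fixes g :: "'b \<Rightarrow> 'k::field"
  assumes g: "fin g" shows "fs_linear (\<lambda>f :: 'a \<Rightarrow> 'k. tens f g)"
  unfolding fs_linear_def
proof (intro allI impI)
  fix f :: "'a \<Rightarrow> 'k" assume f: "fin f"
  have "tens f g = lext dl (tens f g)" by (simp add: lext_dl_id f g)
  also have "\<dots> = lext (\<lambda>a. lext dl (tens (dl a) g)) f"
    by (rule fs_linearD[OF fs_linear_lext_tens_left[OF g] f])
  also have "\<dots> = lext (\<lambda>a. tens (dl a) g) f" by (simp add: lext_dl_id g)
  finally show "tens f g = lext (\<lambda>a. tens (dl a) g) f" .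
qed

lemma tens_linear_right:
  fixes f :: "'a \<Rightarrow> 'k::field"
  assumes f: "fin f" shows "fs_linear (\<lambda>g :: 'b \<Rightarrow> 'k. tens f g)"
  unfolding fs_linear_def
proof (intro allI impI)
  fix g :: "'b \<Rightarrow> 'k" assume g: "fin g"
  have "tens f g = lext dl (tens f g)" by (simp add: lext_dl_id f g)
  also have "\<dots> = lext (\<lambda>a. lext dl (tens f (dl a))) g"
    by (rule fs_linearD[OF fs_linear_lext_tens_right[OF f] g])
  also have "\<dots> = lext (\<lambda>a. tens f (dl a)) g" by (simp add: lext_dl_id f)
  finally show "tens f g = lext (\<lambda>a. tens f (dl a)) g" .
qed

lemma fs_bilinear_eq_on_basis:
  fixes P Q :: "('a \<Rightarrow> 'k::field) \<Rightarrow> ('b \<Rightarrow> 'k) \<Rightarrow> ('c \<Rightarrow> 'k)"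
  assumes l1: "\<And>g. fin g \<Longrightarrow> fs_linear (\<lambda>f. P f g)" and l2: "\<And>g. fin g \<Longrightarrow> fs_linear (\<lambda>f. Q f g)"
    and r1: "\<And>a. fs_linear (\<lambda>g. P (dl a) g)" and r2: "\<And>a. fs_linear (\<lambda>g. Q (dl a) g)"
    and b: "\<And>a b. P (dl a) (dl b) = Q (dl a) (dl b)"
    and f: "fin f" and g: "fin g"
  shows "P f g = Q f g"
proof (rule fs_linear_eq_on_basis[OF l1[OF g] l2[OF g] f])
  fix a show "P (dl a) g = Q (dl a) g"
    by (rule fs_linear_eq_on_basis[OF r1 r2 g]) (rule b)
qed

lemma tens_add_left: "fin f \<Longrightarrow> fin f' \<Longrightarrow> fin g \<Longrightarrow> tens (f + f') g = tens f g + tens f' (g :: _ \<Rightarrow> 'k::field)"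
  by (rule fs_linear_addD[OF tens_linear_left])

lemma tens_add_right: "fin f \<Longrightarrow> fin g \<Longrightarrow> fin g' \<Longrightarrow> tens f (g + g') = tens f g + tens f (g' :: _ \<Rightarrow> 'k::field)"
  by (rule fs_linear_addD[OF tens_linear_right])

lemma tens_diff_left: "fin f \<Longrightarrow> fin f' \<Longrightarrow> fin g \<Longrightarrow> tens (f - f') g = tens f g - tens f' (g :: _ \<Rightarrow> 'k::field)"
  by (rule fs_linear_diffD[OF tens_linear_left])

lemma tens_diff_right: "fin f \<Longrightarrow> fin g \<Longrightarrow> fin g' \<Longrightarrow> tens f (g - g') = tens f g - tens f (g' :: _ \<Rightarrow> 'k::field)"
  by (rule fs_linear_diffD[OF tens_linear_right])

lemma tens_zero_left[simp]: "tens 0 (g :: _ \<Rightarrow> 'k::field) = 0"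
  by (rule ext) (simp add: tens_def split_def)

lemma tens_zero_right[simp]: "tens (f :: _ \<Rightarrow> 'k::field) 0 = 0"
  by (rule ext) (simp add: tens_def split_def)

lemma tens_dl_right: "fin X \<Longrightarrow> tens X (dl b) = lext (\<lambda>p. dl (p, b)) (X :: _ \<Rightarrow> 'k::field)"
  by (simp add: fs_linearD[OF tens_linear_left[OF fin_dl]])

lemma length_snoc_induct [case_names Nil snoc]:
  assumes Nil: "P []"
    and snoc: "\<And>w y. (\<And>v. length v = length w \<Longrightarrow> P v) \<Longrightarrow> P (w @ [y])"
  shows "P w"
proof (induction "length w" arbitrary: w)
  case 0
  then show ?case using Nil by simp
next
  case (Suc n)
  then obtain w' y where "w = w' @ [y]" by (metis length_Suc_conv_rev)
  with Suc show ?case using snoc[of w' y] by simp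
qed

lemma fs_linear_eq_by_length_induct:
  fixes LA LB :: "('b list \<Rightarrow> 'k::field) \<Rightarrow> ('c \<Rightarrow> 'k)"
  assumes l1: "fs_linear LA" and l2: "fs_linear LB"
    and base: "LA (dl []) = LB (dl [])"
    and step: "\<And>w y. (\<And>g. fin g \<Longrightarrow> spt g \<subseteq> {v. length v = length w} \<Longrightarrow> LA g = LB g)
                 \<Longrightarrow> LA (dl (w @ [y])) = LB (dl (w @ [y]))"
    and h: "fin h"
  shows "LA h = LB h"
proof -
  have words: "LA (dl w) = LB (dl w)" for w
  proof (induction w rule: length_snoc_induct)
    case (snoc w y)
    show ?case
    proof (rule step)
      fix g :: "'b list \<Rightarrow> 'k" assume g: "fin g" "spt g \<subseteq> {v. length v = length w}"
      show "LA g = LB g"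
        by (rule fs_linear_eq_on_basis[OF l1 l2 g(1)]) (use g(2) snoc.IH in auto)
    qed
  qed (rule base)
  show ?thesis by (rule fs_linear_eq_on_basis[OF l1 l2 h]) (rule words)
qed

section \<open>Deshuffles\<close>

lemma nths_snoc: "nths (w @ [x]) A = nths w A @ (if length w \<in> A then [x] else [])"
  by (simp add: nths_append)

lemma nths_cong: "(\<And>i. i < length w \<Longrightarrow> i \<in> A \<longleftrightarrow> i \<in> B) \<Longrightarrow> nths w A = nths w B"
proof (induction w rule: rev_induct)
  case Nil thus ?case by simp
next
  case (snoc x w)
  have "nths w A = nths w B" by (rule snoc.IH) (use snoc.prems in auto)
  moreover have "length w \<in> A \<longleftrightarrow> length w \<in> B" using snoc.prems by simp
  ultimately show ?case by (simp add: nths_snoc)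
qed

definition deshuffle_sum :: "('b list \<Rightarrow> 'b list \<Rightarrow> 'c \<Rightarrow> 'k::field) \<Rightarrow> 'b list \<Rightarrow> 'c \<Rightarrow> 'k" where
  "deshuffle_sum G w = (\<Sum>S\<in>Pow {..<length w}. G (nths w S) (nths w ({..<length w} - S)))"

lemma deshuffle_sum_Nil[simp]: "deshuffle_sum G [] = G [] []"
  by (simp add: deshuffle_sum_def)

lemma Pow_lessThan_Suc: "Pow {..<Suc n} = Pow {..<n} \<union> insert n ` Pow {..<n}"
  by (simp add: lessThan_Suc Pow_insert)

lemma deshuffle_sum_snoc:
  "deshuffle_sum G (w @ [y]) = deshuffle_sum (\<lambda>a b. G (a @ [y]) b) w + deshuffle_sum (\<lambda>a b. G a (b @ [y])) w"
proof -
  let ?n = "length w"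
  let ?P = "Pow {..<?n}"
  have disj: "?P \<inter> insert ?n ` ?P = {}" by auto
  have inj: "inj_on (insert ?n) ?P"
    by (rule inj_onI) (metis Pow_iff insert_ident lessThan_iff less_irrefl subsetD)
  have "deshuffle_sum G (w @ [y]) = (\<Sum>S\<in>?P \<union> insert ?n ` ?P. G (nths (w@[y]) S) (nths (w@[y]) ({..<Suc ?n} - S)))"
    by (simp add: deshuffle_sum_def Pow_lessThan_Suc)
  also have "\<dots> = (\<Sum>S\<in>?P. G (nths (w@[y]) S) (nths (w@[y]) ({..<Suc ?n} - S)))
      + (\<Sum>S\<in>insert ?n ` ?P. G (nths (w@[y]) S) (nths (w@[y]) ({..<Suc ?n} - S)))"
    by (rule sum.union_disjoint) (use disj in auto)
  also have "(\<Sum>S\<in>?P. G (nths (w@[y]) S) (nths (w@[y]) ({..<Suc ?n} - S)))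
       = deshuffle_sum (\<lambda>a b. G a (b @ [y])) w"
    unfolding deshuffle_sum_def
  proof (rule sum.cong)
    fix S assume S: "S \<in> ?P"
    have "nths w ({..<Suc ?n} - S) = nths w ({..<?n} - S)" by (rule nths_cong) auto
    thus "G (nths (w@[y]) S) (nths (w@[y]) ({..<Suc ?n} - S)) = G (nths w S) (nths w ({..<?n} - S) @ [y])"
      using S by (auto simp: nths_snoc)
  qed simp
  also have "(\<Sum>S\<in>insert ?n ` ?P. G (nths (w@[y]) S) (nths (w@[y]) ({..<Suc ?n} - S)))
       = (\<Sum>S\<in>?P. G (nths (w@[y]) (insert ?n S)) (nths (w@[y]) ({..<Suc ?n} - insert ?n S)))"
    by (rule sum.reindex_cong[OF inj refl]) simp
  also have "\<dots> = deshuffle_sum (\<lambda>a b. G (a @ [y]) b) w"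
    unfolding deshuffle_sum_def
  proof (rule sum.cong)
    fix S assume S: "S \<in> ?P"
    have "nths w (insert ?n S) = nths w S" by (rule nths_cong) auto
    moreover have "nths w ({..<Suc ?n} - insert ?n S) = nths w ({..<?n} - S)" by (rule nths_cong) auto
    ultimately show "G (nths (w@[y]) (insert ?n S)) (nths (w@[y]) ({..<Suc ?n} - insert ?n S))
        = G (nths w S @ [y]) (nths w ({..<?n} - S))"
      using S by (auto simp: nths_snoc)
  qed simp
  finally show ?thesis by (rule trans) (rule add.commute)
qed

lemma deshuffle_sum_add: "deshuffle_sum (\<lambda>a b. G a b + H a b) w = deshuffle_sum G w + deshuffle_sum H w"
  by (simp add: deshuffle_sum_def sum.distrib)

lemma deshuffle_sum_zero[simp]: "deshuffle_sum (\<lambda>a b. 0) w = 0"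
  by (simp add: deshuffle_sum_def)

lemma deshuffle_sum_scale_vec: "deshuffle_sum (\<lambda>a b. scale_vec c (G a b)) w = scale_vec c (deshuffle_sum G w)"
  by (simp add: deshuffle_sum_def scale_vec_sum)

lemma fin_deshuffle_sum[simp]: "(\<And>a b. fin (G a b)) \<Longrightarrow> fin (deshuffle_sum G w)"
  by (simp add: deshuffle_sum_def)

lemma fs_linear_deshuffle_sum: "fs_linear L \<Longrightarrow> (\<And>a b. fin (G a b)) \<Longrightarrow> L (deshuffle_sum G w) = deshuffle_sum (\<lambda>a b. L (G a b)) w"
  unfolding deshuffle_sum_def by (rule fs_linear_sumD) auto

lemma deshuffle_sum_cong: "(\<And>a b. G a b = H a b) \<Longrightarrow> deshuffle_sum G w = deshuffle_sum H w"
  by (simp add: deshuffle_sum_def)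

lemma deshuffle_sum_counit_left: "deshuffle_sum (\<lambda>a b. if a = [] then G b else 0) w = G w"
proof (induction w arbitrary: G rule: rev_induct)
  case Nil thus ?case by simp
next
  case (snoc y w)
  show ?case
    by (simp add: deshuffle_sum_snoc snoc.IH[of "\<lambda>b. G (b @ [y])"])
qed

lemma deshuffle_sum_counit_right: "deshuffle_sum (\<lambda>a b. if b = [] then G a else 0) w = G w"
proof (induction w arbitrary: G rule: rev_induct)
  case Nil thus ?case by simp
next
  case (snoc y w)
  show ?case
    by (simp add: deshuffle_sum_snoc snoc.IH[of "\<lambda>b. G (b @ [y])"])
qed

lemma deshuffle_sum_split_Nil_left:
  "deshuffle_sum G w = G [] w + (\<Sum>S\<in>Pow {..<length w} - {{}}. G (nths w S) (nths w ({..<length w} - S)))"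
proof -
  have "deshuffle_sum G w = (\<Sum>S\<in>insert {} (Pow {..<length w} - {{}}). G (nths w S) (nths w ({..<length w} - S)))"
    unfolding deshuffle_sum_def by (rule sum.cong) auto
  also have "\<dots> = G [] w + (\<Sum>S\<in>Pow {..<length w} - {{}}. G (nths w S) (nths w ({..<length w} - S)))"
    by (subst sum.insert) (auto simp: nths_all)
  finally show ?thesis .
qed

lemma deshuffle_sum_split_Nil_right:
  "deshuffle_sum G w = G w [] + (\<Sum>S\<in>Pow {..<length w} - {{..<length w}}. G (nths w S) (nths w ({..<length w} - S)))"
proof -
  have "deshuffle_sum G w = (\<Sum>S\<in>insert {..<length w} (Pow {..<length w} - {{..<length w}}). G (nths w S) (nths w ({..<length w} - S)))"
    unfolding deshuffle_sum_def by (rule sum.cong) auto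
  also have "\<dots> = G w [] + (\<Sum>S\<in>Pow {..<length w} - {{..<length w}}. G (nths w S) (nths w ({..<length w} - S)))"
    by (subst sum.insert) (auto simp: nths_all)
  finally show ?thesis .
qed

lemma deshuffle_sum_swap: "deshuffle_sum G w = deshuffle_sum (\<lambda>a b. G b a) w"
proof (induction w arbitrary: G rule: rev_induct)
  case Nil thus ?case by simp
next
  case (snoc y w)
  have "deshuffle_sum G (w @ [y]) = deshuffle_sum (\<lambda>a b. G (a @ [y]) b) w + deshuffle_sum (\<lambda>a b. G a (b @ [y])) w"
    by (rule deshuffle_sum_snoc)
  also have "\<dots> = deshuffle_sum (\<lambda>a b. G (b @ [y]) a) w + deshuffle_sum (\<lambda>a b. G b (a @ [y])) w"
    using snoc.IH[of "\<lambda>a b. G (a @ [y]) b"] snoc.IH[of "\<lambda>a b. G a (b @ [y])"] by simp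
  also have "\<dots> = deshuffle_sum (\<lambda>a b. G b a) (w @ [y])"
    by (simp add: deshuffle_sum_snoc add.commute)
  finally show ?case .
qed

lemma deshuffle_sum_coassoc:
  "deshuffle_sum (\<lambda>a b. deshuffle_sum (\<lambda>c d. K c d b) a) w = deshuffle_sum (\<lambda>a b. deshuffle_sum (\<lambda>c d. K a c d) b) w"
proof (induction w arbitrary: K rule: rev_induct)
  case Nil thus ?case by simp
next
  case (snoc y w)
  have "deshuffle_sum (\<lambda>a b. deshuffle_sum (\<lambda>c d. K c d b) a) (w @ [y])
     = deshuffle_sum (\<lambda>a b. deshuffle_sum (\<lambda>c d. K (c @ [y]) d b) a) w + deshuffle_sum (\<lambda>a b. deshuffle_sum (\<lambda>c d. K c (d @ [y]) b) a) w
       + deshuffle_sum (\<lambda>a b. deshuffle_sum (\<lambda>c d. K c d (b @ [y])) a) w"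
    by (simp only: deshuffle_sum_snoc deshuffle_sum_add)
  also have "\<dots> = deshuffle_sum (\<lambda>a b. deshuffle_sum (\<lambda>c d. K (a @ [y]) c d) b) w + deshuffle_sum (\<lambda>a b. deshuffle_sum (\<lambda>c d. K a (c @ [y]) d) b) w
       + deshuffle_sum (\<lambda>a b. deshuffle_sum (\<lambda>c d. K a c (d @ [y])) b) w"
    by (simp only: snoc.IH[of "\<lambda>c d b. K (c @ [y]) d b"] snoc.IH[of "\<lambda>c d b. K c (d @ [y]) b"]
        snoc.IH[of "\<lambda>c d b. K c d (b @ [y])"])
  also have "\<dots> = deshuffle_sum (\<lambda>a b. deshuffle_sum (\<lambda>c d. K a c d) b) (w @ [y])"
    by (simp only: deshuffle_sum_snoc deshuffle_sum_add add.assoc)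
  finally show ?case .
qed

lemma deshuffle_sum_append:
  "deshuffle_sum G (u @ v) = deshuffle_sum (\<lambda>a b. deshuffle_sum (\<lambda>c d. G (a @ c) (b @ d)) v) u"
proof (induction v arbitrary: G rule: rev_induct)
  case Nil thus ?case by simp
next
  case (snoc y v)
  have "deshuffle_sum G (u @ v @ [y]) = deshuffle_sum G ((u @ v) @ [y])" by simp
  also have "\<dots> = deshuffle_sum (\<lambda>a b. G (a @ [y]) b) (u @ v) + deshuffle_sum (\<lambda>a b. G a (b @ [y])) (u @ v)"
    by (rule deshuffle_sum_snoc)
  also have "\<dots> = deshuffle_sum (\<lambda>a b. deshuffle_sum (\<lambda>c d. G (a @ c @ [y]) (b @ d)) v) u
      + deshuffle_sum (\<lambda>a b. deshuffle_sum (\<lambda>c d. G (a @ c) (b @ d @ [y])) v) u"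
    by (simp add: snoc.IH)
  also have "\<dots> = deshuffle_sum (\<lambda>a b. deshuffle_sum (\<lambda>c d. G (a @ c) (b @ d)) (v @ [y])) u"
    by (simp only: deshuffle_sum_snoc deshuffle_sum_add append_assoc)
  finally show ?case .
qed

lemma tv_cop_w_eq:
  "tv_cop_w w p = of_nat (card {S \<in> Pow {..<length w}. (nths w S, nths w ({..<length w} - S)) = p})"
  by (cases p) (simp add: tv_cop_w_def conj_commute)

lemma spt_tv_cop_w:
  "spt (tv_cop_w w :: _ \<Rightarrow> 'k::field) \<subseteq> (\<lambda>S. (nths w S, nths w ({..<length w} - S))) ` Pow {..<length w}"
proof
  fix p assume "p \<in> spt (tv_cop_w w :: _ \<Rightarrow> 'k)"
  hence "(of_nat (card {S \<in> Pow {..<length w}. (nths w S, nths w ({..<length w} - S)) = p}) :: 'k) \<noteq> 0"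
    by (simp add: spt_def tv_cop_w_eq)
  hence "card {S \<in> Pow {..<length w}. (nths w S, nths w ({..<length w} - S)) = p} \<noteq> 0"
    by (metis of_nat_0)
  hence "{S \<in> Pow {..<length w}. (nths w S, nths w ({..<length w} - S)) = p} \<noteq> {}"
    by (metis card.empty)
  thus "p \<in> (\<lambda>S. (nths w S, nths w ({..<length w} - S))) ` Pow {..<length w}" by blast
qed

lemma fin_tv_cop_w[simp]: "fin (tv_cop_w w :: _ \<Rightarrow> 'k::field)"
  unfolding fin_def by (rule finite_subset[OF spt_tv_cop_w]) simp

lemma lext_tv_cop_w: "lext h (tv_cop_w w :: _ \<Rightarrow> 'k::field) = deshuffle_sum (\<lambda>a b. h (a, b)) w"
proof -
  let ?P = "\<lambda>S. (nths w S, nths w ({..<length w} - S))"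
  let ?A = "Pow {..<length w}"
  let ?X = "\<lambda>p. {S \<in> ?A. ?P S = p}"
  have "lext h (tv_cop_w w :: _ \<Rightarrow> 'k) = (\<Sum>p\<in>?P ` ?A. scale_vec (tv_cop_w w p) (h p))"
    by (rule lext_eq_sum[OF _ spt_tv_cop_w]) simp
  also have "\<dots> = (\<Sum>p\<in>?P ` ?A. \<Sum>S\<in>?X p. h p)"
  proof (rule sum.cong)
    fix p
    have "scale_vec (tv_cop_w w p :: 'k) (h p) = scale_vec (\<Sum>S\<in>?X p. 1) (h p)"
      by (simp add: tv_cop_w_eq)
    also have "\<dots> = (\<Sum>S\<in>?X p. h p)" by (simp only: scale_vec_sum_scalars scale_vec_one)
    finally show "scale_vec (tv_cop_w w p :: 'k) (h p) = (\<Sum>S\<in>?X p. h p)" .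
  qed simp
  also have "\<dots> = (\<Sum>p\<in>?P ` ?A. \<Sum>S\<in>?X p. h (?P S))"
    by (rule sum.cong[OF refl], rule sum.cong) auto
  also have "\<dots> = (\<Sum>S\<in>?A. h (?P S))"
    by (rule sum.group) auto
  finally show ?thesis by (simp add: deshuffle_sum_def)
qed

lemma tv_cop_w_eq_deshuffle_sum: "(tv_cop_w w :: _ \<Rightarrow> 'k::field) = deshuffle_sum (\<lambda>a b. dl (a, b)) w"
  using lext_tv_cop_w[of dl w] by (simp add: lext_dl_id)

lemma tv_cop_w_single: "(tv_cop_w [x] :: _ \<Rightarrow> 'k::field) = dl ([x], []) + dl ([], [x])"
proof -
  have "(tv_cop_w [x] :: _ \<Rightarrow> 'k) = deshuffle_sum (\<lambda>a b. dl (a, b)) ([] @ [x])"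
    by (simp only: append_Nil tv_cop_w_eq_deshuffle_sum)
  also have "\<dots> = deshuffle_sum (\<lambda>a b. dl (a @ [x], b)) [] + deshuffle_sum (\<lambda>a b. dl (a, b @ [x])) []"
    by (rule deshuffle_sum_snoc)
  also have "\<dots> = dl ([x], []) + dl ([], [x])" by (simp only: deshuffle_sum_Nil append_Nil)
  finally show ?thesis .
qed

lemma tv_cop_w_coassoc:
  "deshuffle_sum (\<lambda>a b. tens (tv_cop_w a) (dl b)) w
   = deshuffle_sum (\<lambda>a b. lext (\<lambda>(c, d). dl ((a, c), d)) (tv_cop_w b) :: _ \<Rightarrow> 'k::field) w"
proof -
  have "deshuffle_sum (\<lambda>a b. tens (tv_cop_w a) (dl b) :: _ \<Rightarrow> 'k) w
      = deshuffle_sum (\<lambda>a b. deshuffle_sum (\<lambda>c d. dl ((c, d), b)) a) w"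
    by (simp add: tens_dl_right lext_tv_cop_w)
  also have "\<dots> = deshuffle_sum (\<lambda>a b. deshuffle_sum (\<lambda>c d. dl ((a, c), d)) b) w"
    by (rule deshuffle_sum_coassoc)
  also have "\<dots> = deshuffle_sum (\<lambda>a b. lext (\<lambda>(c, d). dl ((a, c), d)) (tv_cop_w b)) w"
    by (simp add: lext_tv_cop_w)
  finally show ?thesis .
qed

lemma tv_mult_dl[simp]: "tv_mult (dl u) (dl v) = (dl (u @ v) :: _ \<Rightarrow> 'k::field)"
  by (simp add: tv_mult_def)

lemma tv_mult_linear_left: "fin g \<Longrightarrow> fs_linear (\<lambda>f. tv_mult f (g :: _ \<Rightarrow> 'k::field))"
  unfolding tv_mult_def by (rule fs_linear_lext_tens_left)

lemma tv_mult_linear_right: "fin f \<Longrightarrow> fs_linear (\<lambda>g. tv_mult (f :: _ \<Rightarrow> 'k::field) g)"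
  unfolding tv_mult_def by (rule fs_linear_lext_tens_right)

lemma fin_tv_mult[simp]: "fin f \<Longrightarrow> fin g \<Longrightarrow> fin (tv_mult f (g :: _ \<Rightarrow> 'k::field))"
  unfolding tv_mult_def by (simp add: split_def)

lemma tv_mult_assoc:
  fixes f g h :: "'b list \<Rightarrow> 'k::field"
  assumes "fin f" "fin g" "fin h"
  shows "tv_mult (tv_mult f g) h = tv_mult f (tv_mult g h)"
proof -
  have L1: "fs_linear (\<lambda>f. tv_mult (tv_mult f g) h)"
    by (rule fs_linear_comp[OF tv_mult_linear_left tv_mult_linear_left]) (simp_all add: assms)
  have L2: "fs_linear (\<lambda>f. tv_mult f (tv_mult g h))"
    by (rule tv_mult_linear_left) (simp add: assms)
  show ?thesis
  proof (rule fs_linear_eq_on_basis[OF L1 L2 assms(1)])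
    fix a
    show "tv_mult (tv_mult (dl a) g) h = tv_mult (dl a) (tv_mult g h)"
    proof (rule fs_bilinear_eq_on_basis[where P = "\<lambda>g h. tv_mult (tv_mult (dl a) g) h"
          and Q = "\<lambda>g h. tv_mult (dl a) (tv_mult g h)", OF _ _ _ _ _ assms(2,3)])
      fix g :: "'b list \<Rightarrow> 'k" assume g: "fin g"
      show "fs_linear (\<lambda>f. tv_mult (tv_mult (dl a) f) g)"
        by (rule fs_linear_comp[OF tv_mult_linear_left[OF g] tv_mult_linear_right]) simp_all
      show "fs_linear (\<lambda>f. tv_mult (dl a) (tv_mult f g))"
        by (rule fs_linear_comp[OF tv_mult_linear_right tv_mult_linear_left[OF g]]) (simp_all add: g)
    next
      fix b
      show "fs_linear (\<lambda>g. tv_mult (tv_mult (dl a) (dl b)) g)" by (rule tv_mult_linear_right) simp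
      show "fs_linear (\<lambda>g. tv_mult (dl a) (tv_mult (dl b) g))"
        by (rule fs_linear_comp[OF tv_mult_linear_right tv_mult_linear_right]) simp_all
    next
      fix b c show "tv_mult (tv_mult (dl a) (dl b)) (dl c) = tv_mult (dl a) (tv_mult (dl b) (dl c))"
        by simp
    qed
  qed
qed

lemma tv_mult_unit_left: "fin f \<Longrightarrow> tv_mult tv_unit f = (f :: _ \<Rightarrow> 'k::field)"
  unfolding tv_unit_def by (rule fs_linear_eq_on_basis[OF tv_mult_linear_right fs_linear_id]) simp_all

lemma tv_mult_unit_right: "fin f \<Longrightarrow> tv_mult f tv_unit = (f :: _ \<Rightarrow> 'k::field)"
  unfolding tv_unit_def by (rule fs_linear_eq_on_basis[OF tv_mult_linear_left fs_linear_id]) simp_all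

lemma tv_mult_add_left: "fin f \<Longrightarrow> fin f' \<Longrightarrow> fin g \<Longrightarrow> tv_mult (f + f') g = tv_mult f g + tv_mult f' (g :: _ \<Rightarrow> 'k::field)"
  by (rule fs_linear_addD[OF tv_mult_linear_left])

lemma tv_mult_add_right: "fin f \<Longrightarrow> fin g \<Longrightarrow> fin g' \<Longrightarrow> tv_mult f (g + g') = tv_mult f g + tv_mult f (g' :: _ \<Rightarrow> 'k::field)"
  by (rule fs_linear_addD[OF tv_mult_linear_right])

lemma tv_mult_diff_left: "fin f \<Longrightarrow> fin f' \<Longrightarrow> fin g \<Longrightarrow> tv_mult (f - f') g = tv_mult f g - tv_mult f' (g :: _ \<Rightarrow> 'k::field)"
  by (rule fs_linear_diffD[OF tv_mult_linear_left])

lemma tv_mult_diff_right: "fin f \<Longrightarrow> fin g \<Longrightarrow> fin g' \<Longrightarrow> tv_mult f (g - g') = tv_mult f g - tv_mult f (g' :: _ \<Rightarrow> 'k::field)"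
  by (rule fs_linear_diffD[OF tv_mult_linear_right])

lemma tv_mult_zero_left[simp]: "tv_mult 0 g = 0"
  by (rule ext) (simp add: tv_mult_def tens_def lext_def spt_def)

lemma tv_mult_zero_right[simp]: "tv_mult f 0 = 0"
  by (rule ext) (simp add: tv_mult_def tens_def lext_def spt_def)

lemma tv_mult_scale_vec_left: "fin f \<Longrightarrow> fin g \<Longrightarrow> tv_mult (scale_vec c f) g = scale_vec c (tv_mult f (g :: _ \<Rightarrow> 'k::field))"
  by (rule fs_linear_scale_vecD[OF tv_mult_linear_left])

lemma tv_mult_scale_vec_right: "fin f \<Longrightarrow> fin g \<Longrightarrow> tv_mult f (scale_vec c g) = scale_vec c (tv_mult f (g :: _ \<Rightarrow> 'k::field))"
  by (rule fs_linear_scale_vecD[OF tv_mult_linear_right])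

lemma spt_tv_multD:
  fixes f g :: "'b list \<Rightarrow> 'k::field"
  shows "fin f \<Longrightarrow> fin g \<Longrightarrow> z \<in> spt (tv_mult f g) \<Longrightarrow> \<exists>u\<in>spt f. \<exists>v\<in>spt g. z = u @ v"
proof -
  assume f: "fin f" and g: "fin g" and z: "z \<in> spt (tv_mult f g)"
  have "tv_mult f g = lext (\<lambda>u. lext (\<lambda>v. dl (u @ v)) g) f" by (simp add: tv_mult_def lext_tens f g)
  with z obtain u where u: "u \<in> spt f" "z \<in> spt (lext (\<lambda>v. dl (u @ v)) g)" by (auto dest: spt_lextD)
  then obtain v where v: "v \<in> spt g" "z \<in> spt (dl (u @ v) :: _ \<Rightarrow> 'k)" by (auto dest: spt_lextD)
  thus ?thesis using u by (auto simp: spt_dl)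
qed

lemma tv_mult2_dl[simp]: "tv_mult2 (dl (a, b)) (dl (c, d)) = (dl (a @ c, b @ d) :: _ \<Rightarrow> 'k::field)"
  by (simp add: tv_mult2_def)

lemma tv_mult2_linear_left: "fin g \<Longrightarrow> fs_linear (\<lambda>f. tv_mult2 f (g :: _ \<Rightarrow> 'k::field))"
  unfolding tv_mult2_def by (rule fs_linear_lext_tens_left)

lemma tv_mult2_linear_right: "fin f \<Longrightarrow> fs_linear (\<lambda>g. tv_mult2 (f :: _ \<Rightarrow> 'k::field) g)"
  unfolding tv_mult2_def by (rule fs_linear_lext_tens_right)

lemma fin_tv_mult2[simp]: "fin f \<Longrightarrow> fin g \<Longrightarrow> fin (tv_mult2 f (g :: _ \<Rightarrow> 'k::field))"
  unfolding tv_mult2_def by (simp add: split_def)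

lemma tv_mult2_add_left: "fin f \<Longrightarrow> fin f' \<Longrightarrow> fin g \<Longrightarrow> tv_mult2 (f + f') g = tv_mult2 f g + tv_mult2 f' (g :: _ \<Rightarrow> 'k::field)"
  by (rule fs_linear_addD[OF tv_mult2_linear_left])

lemma tv_mult2_add_right: "fin f \<Longrightarrow> fin g \<Longrightarrow> fin g' \<Longrightarrow> tv_mult2 f (g + g') = tv_mult2 f g + tv_mult2 f (g' :: _ \<Rightarrow> 'k::field)"
  by (rule fs_linear_addD[OF tv_mult2_linear_right])

lemma tv_mult2_tens:
  fixes f g h k :: "'b list \<Rightarrow> 'k::field"
  assumes "fin f" "fin g" "fin h" "fin k"
  shows "tv_mult2 (tens f g) (tens h k) = tens (tv_mult f h) (tv_mult g k)"
  using lext_tens_tens[OF assms, of "\<lambda>a c. dl (a @ c)" "\<lambda>b d. dl (b @ d)"]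
  by (simp add: tv_mult2_def tv_mult_def)

lemma tv_cop_dl[simp]: "tv_cop (dl w) = (tv_cop_w w :: _ \<Rightarrow> 'k::field)"
  by (simp add: tv_cop_def)

lemma tv_cop_linear: "fs_linear (tv_cop :: (_ \<Rightarrow> 'k::field) \<Rightarrow> _)"
  unfolding tv_cop_def[abs_def] by (rule fs_linear_lext)

lemma fin_tv_cop[simp]: "fin f \<Longrightarrow> fin (tv_cop (f :: _ \<Rightarrow> 'k::field))"
  by (simp add: tv_cop_def)

lemma tv_cop_add: "fin f \<Longrightarrow> fin g \<Longrightarrow> tv_cop (f + g) = tv_cop f + tv_cop (g :: _ \<Rightarrow> 'k::field)"
  by (rule fs_linear_addD[OF tv_cop_linear])

lemma tv_cop_diff: "fin f \<Longrightarrow> fin g \<Longrightarrow> tv_cop (f - g) = tv_cop f - tv_cop (g :: _ \<Rightarrow> 'k::field)"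
  by (rule fs_linear_diffD[OF tv_cop_linear])

lemma tv_cop_zero[simp]: "tv_cop 0 = (0 :: _ \<Rightarrow> 'k::field)"
  by (rule fs_linear_zeroD[OF tv_cop_linear])

lemma lext_tv_cop: "fin f \<Longrightarrow> lext h (tv_cop (f :: _ \<Rightarrow> 'k::field)) = lext (\<lambda>w. deshuffle_sum (\<lambda>a b. h (a, b)) w) f"
  by (simp add: tv_cop_def lext_comp lext_tv_cop_w)

lemma tv_mult2_dl_tv_cop_w:
  "tv_mult2 (dl (a, b)) (tv_cop_w v) = deshuffle_sum (\<lambda>c d. dl (a @ c, b @ d) :: _ \<Rightarrow> 'k::field) v"
proof -
  have "tv_mult2 (dl (a, b)) (tv_cop_w v :: _ \<Rightarrow> 'k) = lext (\<lambda>q. tv_mult2 (dl (a, b)) (dl q)) (tv_cop_w v)"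
    by (rule fs_linearD[OF tv_mult2_linear_right]) simp_all
  also have "\<dots> = deshuffle_sum (\<lambda>c d. dl (a @ c, b @ d)) v" by (simp add: lext_tv_cop_w)
  finally show ?thesis .
qed

lemma tv_cop_w_append: "(tv_cop_w (u @ v) :: _ \<Rightarrow> 'k::field) = tv_mult2 (tv_cop_w u) (tv_cop_w v)"
proof -
  have "tv_mult2 (tv_cop_w u) (tv_cop_w v :: _ \<Rightarrow> 'k) = lext (\<lambda>p. tv_mult2 (dl p) (tv_cop_w v)) (tv_cop_w u)"
    by (rule fs_linearD[OF tv_mult2_linear_left]) simp_all
  also have "\<dots> = deshuffle_sum (\<lambda>a b. deshuffle_sum (\<lambda>c d. dl (a @ c, b @ d)) v) u"
    by (simp add: lext_tv_cop_w tv_mult2_dl_tv_cop_w)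
  also have "\<dots> = tv_cop_w (u @ v)"
    by (simp add: tv_cop_w_eq_deshuffle_sum[of "u @ v"] deshuffle_sum_append)
  finally show ?thesis by simp
qed

lemma tv_cop_mult:
  fixes f g :: "'b list \<Rightarrow> 'k::field"
  assumes "fin f" "fin g"
  shows "tv_cop (tv_mult f g) = tv_mult2 (tv_cop f) (tv_cop g)"
proof (rule fs_bilinear_eq_on_basis[where P = "\<lambda>f g. tv_cop (tv_mult f g)" and Q = "\<lambda>f g. tv_mult2 (tv_cop f) (tv_cop g)", OF _ _ _ _ _ assms])
  fix g :: "'b list \<Rightarrow> 'k" assume g: "fin g"
  show "fs_linear (\<lambda>f. tv_cop (tv_mult f g))" by (rule fs_linear_comp[OF tv_cop_linear tv_mult_linear_left[OF g]]) (simp add: g)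
  show "fs_linear (\<lambda>f. tv_mult2 (tv_cop f) (tv_cop g))" by (rule fs_linear_comp[OF tv_mult2_linear_left tv_cop_linear]) (simp_all add: g)
next
  fix a
  show "fs_linear (\<lambda>g. tv_cop (tv_mult (dl a) g))" by (rule fs_linear_comp[OF tv_cop_linear tv_mult_linear_right]) simp_all
  show "fs_linear (\<lambda>g. tv_mult2 (tv_cop (dl a)) (tv_cop g))" by (rule fs_linear_comp[OF tv_mult2_linear_right tv_cop_linear]) simp_all
next
  fix a b show "tv_cop (tv_mult (dl a) (dl b)) = tv_mult2 (tv_cop (dl a)) (tv_cop (dl b) :: _ \<Rightarrow> 'k)"
    by (simp add: tv_cop_w_append)
qed

lemma tv_eps_dl: "tv_eps (dl w :: _ \<Rightarrow> 'k::field) = (if w = [] then 1 else 0)"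
  by (simp add: tv_eps_def dl_def)

lemma tv_eps_mult: 
  fixes f g :: "'b list \<Rightarrow> 'k::field"
  assumes "fin f" "fin g"
  shows "tv_eps (tv_mult f g) = tv_eps f * tv_eps g"
proof -
  have "tv_mult f g [] = (\<Sum>p\<in>spt f \<times> spt g. tens f g p * dl (fst p @ snd p) [])"
    by (simp add: tv_mult_def lext_def spt_tens split_def)
  also have "\<dots> = (\<Sum>p\<in>spt f \<times> spt g. if p = ([], []) then f [] * g [] else 0)"
    by (rule sum.cong) (auto simp: dl_def tens_def)
  also have "\<dots> = f [] * g []"
    using assms by (auto simp: fin_def spt_def)
  finally show ?thesis by (simp add: tv_eps_def)
qed

lemma lext_if_Nil: "fin f \<Longrightarrow> lext (\<lambda>w. if w = [] then g else 0) f = scale_vec (f []) (g :: _ \<Rightarrow> 'k::field)"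
proof (rule ext)
  fix z assume f: "fin f"
  have "lext (\<lambda>w. if w = [] then g else 0) f z = (\<Sum>w\<in>spt f. f w * (if w = [] then g else 0) z)"
    by (simp add: lext_def)
  also have "\<dots> = (\<Sum>w\<in>spt f. if w = [] then f [] * g z else 0)"
    by (rule sum.cong) auto
  also have "\<dots> = f [] * g z" using f by (auto simp: fin_def spt_def)
  finally show "lext (\<lambda>w. if w = [] then g else 0) f z = scale_vec (f []) g z" by simp
qed

definition antipode_word :: "'b list \<Rightarrow> 'b list \<Rightarrow> 'k::field" where
  "antipode_word w = scale_vec ((-1) ^ length w) (dl (rev w))"

lemma fin_antipode_word[simp]: "fin (antipode_word w)"
  by (simp add: antipode_word_def)

lemma tv_mult_antipode_word_dl: "tv_mult (antipode_word a) (dl b) = scale_vec ((-1) ^ length a) (dl (rev a @ b) :: _ \<Rightarrow> 'k::field)"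
  by (simp add: antipode_word_def tv_mult_scale_vec_left)

lemma tv_mult_dl_antipode_word: "tv_mult (dl a) (antipode_word b) = scale_vec ((-1) ^ length b) (dl (a @ rev b) :: _ \<Rightarrow> 'k::field)"
  by (simp add: antipode_word_def tv_mult_scale_vec_right)

lemma antipode_word_left:
  "deshuffle_sum (\<lambda>a b. tv_mult (antipode_word a) (dl b)) w = (if w = [] then dl [] else (0 :: _ \<Rightarrow> 'k::field))"
proof (induction w rule: rev_induct)
  case Nil thus ?case by (simp add: tv_mult_antipode_word_dl)
next
  case (snoc y w)
  let ?P = "deshuffle_sum (\<lambda>a b. tv_mult (antipode_word a) (dl b)) w :: _ \<Rightarrow> 'k"
  have e1: "deshuffle_sum (\<lambda>a b. tv_mult (antipode_word (a @ [y])) (dl b)) w = scale_vec (-1) (tv_mult (dl [y]) ?P)"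
  proof -
    have "deshuffle_sum (\<lambda>a b. tv_mult (antipode_word (a @ [y])) (dl b)) w
        = deshuffle_sum (\<lambda>a b. scale_vec (-1) (tv_mult (dl [y]) (tv_mult (antipode_word a) (dl b)))) w"
      by (rule deshuffle_sum_cong) (simp add: tv_mult_antipode_word_dl tv_mult_scale_vec_right scale_vec_scale_vec)
    also have "\<dots> = scale_vec (-1) (deshuffle_sum (\<lambda>a b. tv_mult (dl [y]) (tv_mult (antipode_word a) (dl b))) w)"
      by (rule deshuffle_sum_scale_vec)
    also have "\<dots> = scale_vec (-1) (tv_mult (dl [y]) ?P)"
      by (simp add: fs_linear_deshuffle_sum[OF tv_mult_linear_right])
    finally show ?thesis .
  qed
  have e2: "deshuffle_sum (\<lambda>a b. tv_mult (antipode_word a) (dl (b @ [y]))) w = tv_mult ?P (dl [y])"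
  proof -
    have "deshuffle_sum (\<lambda>a b. tv_mult (antipode_word a) (dl (b @ [y]))) w
        = deshuffle_sum (\<lambda>a b. tv_mult (tv_mult (antipode_word a) (dl b)) (dl [y])) w"
      by (rule deshuffle_sum_cong) (simp add: tv_mult_assoc)
    also have "\<dots> = tv_mult ?P (dl [y])"
      by (simp add: fs_linear_deshuffle_sum[OF tv_mult_linear_left])
    finally show ?thesis .
  qed
  show ?case
    by (simp add: deshuffle_sum_snoc e1 e2 snoc.IH scale_vec_minus_one_add)
qed

lemma antipode_word_right:
  "deshuffle_sum (\<lambda>a b. tv_mult (dl a) (antipode_word b)) w = (if w = [] then dl [] else (0 :: _ \<Rightarrow> 'k::field))"
proof (induction w rule: rev_induct)
  case Nil thus ?case by (simp add: tv_mult_dl_antipode_word)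
next
  case (snoc y w)
  let ?X = "deshuffle_sum (\<lambda>a b. tv_mult (dl (a @ [y])) (antipode_word b)) w :: _ \<Rightarrow> 'k"
  have "deshuffle_sum (\<lambda>a b. tv_mult (dl a) (antipode_word (b @ [y]))) w
      = deshuffle_sum (\<lambda>a b. scale_vec (-1) (tv_mult (dl (a @ [y])) (antipode_word b))) w"
    by (rule deshuffle_sum_cong) (simp add: tv_mult_dl_antipode_word scale_vec_scale_vec)
  also have "\<dots> = scale_vec (-1) ?X" by (rule deshuffle_sum_scale_vec)
  finally show ?case by (simp add: deshuffle_sum_snoc add_scale_vec_minus_one)
qed

lemma tv_counit_left:
  fixes f :: "'b list \<Rightarrow> 'k::field"
  assumes f: "fin f"
  shows "lext (\<lambda>(a, b). (\<lambda>x. tv_eps (dl a :: 'b list \<Rightarrow> 'k) * dl b x)) (tv_cop f) = f"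
proof -
  have eq: "(\<lambda>(a, b). (\<lambda>x. tv_eps (dl a :: 'b list \<Rightarrow> 'k) * dl b x)) = (\<lambda>(a, b). if a = [] then dl b else 0)"
    by (auto simp: fun_eq_iff tv_eps_dl)
  have "lext (\<lambda>(a, b). (\<lambda>x. tv_eps (dl a :: 'b list \<Rightarrow> 'k) * dl b x)) (tv_cop f)
      = lext (\<lambda>w. deshuffle_sum (\<lambda>a b. if a = [] then dl b else 0) w) f"
    by (simp only: eq lext_tv_cop[OF f]) simp
  then show ?thesis
    by (simp add: deshuffle_sum_counit_left lext_dl_id f)
qed

lemma tv_counit_right:
  fixes f :: "'b list \<Rightarrow> 'k::field"
  assumes f: "fin f"
  shows "lext (\<lambda>(a, b). (\<lambda>x. dl a x * tv_eps (dl b :: 'b list \<Rightarrow> 'k))) (tv_cop f) = f"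
proof -
  have eq: "(\<lambda>(a, b). (\<lambda>x. dl a x * tv_eps (dl b :: 'b list \<Rightarrow> 'k))) = (\<lambda>(a, b). if b = [] then dl a else 0)"
    by (auto simp: fun_eq_iff tv_eps_dl)
  have "lext (\<lambda>(a, b). (\<lambda>x. dl a x * tv_eps (dl b :: 'b list \<Rightarrow> 'k))) (tv_cop f)
      = lext (\<lambda>w. deshuffle_sum (\<lambda>a b. if b = [] then dl a else 0) w) f"
    by (simp only: eq lext_tv_cop[OF f]) simp
  then show ?thesis
    by (simp add: deshuffle_sum_counit_right lext_dl_id f)
qed

lemma tv_antipode_left:
  "fin f \<Longrightarrow> lext (\<lambda>(a, b). tv_mult (antipode_word a) (dl b)) (tv_cop f) = (\<lambda>x. tv_eps f * tv_unit x)"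
  by (simp add: lext_tv_cop antipode_word_left lext_if_Nil tv_eps_def tv_unit_def fun_eq_iff)

lemma tv_antipode_right:
  "fin f \<Longrightarrow> lext (\<lambda>(a, b). tv_mult (dl a) (antipode_word b)) (tv_cop f) = (\<lambda>x. tv_eps f * tv_unit x)"
  by (simp add: lext_tv_cop antipode_word_right lext_if_Nil tv_eps_def tv_unit_def fun_eq_iff)

lemma hopf_tensor_algebra: "tv_hopf TYPE('b) TYPE('k::field)"
  unfolding tv_hopf_def
proof (intro conjI allI impI)
  fix f :: "'b list \<Rightarrow> 'k" assume f: "fin f"
  show "lext (\<lambda>(a, b). tens (tv_cop_w a) (dl b)) (tv_cop f)
        = lext (\<lambda>(a, b). lext (\<lambda>(c, d). dl ((a, c), d)) (tv_cop_w b)) (tv_cop f)"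
    by (simp add: lext_tv_cop f tv_cop_w_coassoc)
  show "lext (\<lambda>(a, b). (\<lambda>x. tv_eps (dl a :: 'b list \<Rightarrow> 'k) * dl b x)) (tv_cop f) = f"
    by (rule tv_counit_left[OF f])
  show "lext (\<lambda>(a, b). (\<lambda>x. dl a x * tv_eps (dl b :: 'b list \<Rightarrow> 'k))) (tv_cop f) = f"
    by (rule tv_counit_right[OF f])
next
  show "tv_cop (tv_unit :: 'b list \<Rightarrow> 'k) = dl ([], [])" "tv_eps (tv_unit :: 'b list \<Rightarrow> 'k) = 1"
    by (simp_all add: tv_unit_def tv_cop_w_eq_deshuffle_sum tv_eps_dl)
next
  show "\<exists>s :: 'b list \<Rightarrow> 'b list \<Rightarrow> 'k. (\<forall>w. fin (s w)) \<and>
        (\<forall>f. fin f \<longrightarrow>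
          lext (\<lambda>(a, b). tv_mult (s a) (dl b)) (tv_cop f) = (\<lambda>x. tv_eps f * tv_unit x) \<and>
          lext (\<lambda>(a, b). tv_mult (dl a) (s b)) (tv_cop f) = (\<lambda>x. tv_eps f * tv_unit x))"
    by (intro exI[of _ antipode_word]) (simp add: tv_antipode_left tv_antipode_right)
qed (simp_all add: tv_mult_assoc tv_mult_unit_left tv_mult_unit_right tv_cop_mult tv_eps_mult)

lemma cocommutative_tensor_algebra: "tv_cocommutative TYPE('b) TYPE('k::field)"
  unfolding tv_cocommutative_def
proof (intro allI impI)
  fix f :: "'b list \<Rightarrow> 'k" and u v assume f: "fin f"
  have c: "tv_cop_w w (u, v) = (tv_cop_w w (v, u) :: 'k)" for w :: "'b list"
  proof -
    have "(tv_cop_w w :: _ \<Rightarrow> 'k) = deshuffle_sum (\<lambda>a b. dl (b, a)) w"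
      by (simp add: tv_cop_w_eq_deshuffle_sum deshuffle_sum_swap[of "\<lambda>a b. dl (a, b)"])
    hence "tv_cop_w w (u, v) = (deshuffle_sum (\<lambda>a b. dl (b, a)) w (u, v) :: 'k)" by simp
    also have "\<dots> = deshuffle_sum (\<lambda>a b. dl (a, b)) w (v, u)"
      by (simp add: deshuffle_sum_def sum_fun_apply dl_def conj_commute)
    also have "\<dots> = tv_cop_w w (v, u)" by (simp add: tv_cop_w_eq_deshuffle_sum)
    finally show ?thesis .
  qed
  show "tv_cop f (u, v) = tv_cop f (v, u)"
    by (simp add: tv_cop_def lext_def c)
qed

definition embed :: "('b \<Rightarrow> 'k::field) \<Rightarrow> 'b list \<Rightarrow> 'k" where
  "embed g = lext (\<lambda>z. dl [z]) g"

lemma fin_embed[simp]: "fin g \<Longrightarrow> fin (embed g)"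
  by (simp add: embed_def)

lemma embed_linear: "fs_linear (embed :: ('b \<Rightarrow> 'k::field) \<Rightarrow> _)"
  unfolding embed_def[abs_def] by (rule fs_linear_lext)

lemma embed_dl[simp]: "embed (dl z) = (dl [z] :: _ \<Rightarrow> 'k::field)"
  by (simp add: embed_def)

lemma tv_cop_embed:
  fixes g :: "'b \<Rightarrow> 'k::field"
  assumes g: "fin g"
  shows "tv_cop (embed g) = tens (embed g) (dl []) + tens (dl []) (embed g)"
proof -
  have l1: "fs_linear (\<lambda>g :: 'b \<Rightarrow> 'k. tv_cop (embed g))"
    by (rule fs_linear_comp[OF tv_cop_linear embed_linear]) (simp only: embed_dl fin_dl)
  have l2: "fs_linear (\<lambda>g :: 'b \<Rightarrow> 'k. tens (embed g) (dl []) + tens (dl []) (embed g :: _ \<Rightarrow> 'k))"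
    by (rule fs_linear_add[OF fs_linear_comp[OF tens_linear_left embed_linear] fs_linear_comp[OF tens_linear_right embed_linear]]) (simp_all only: embed_dl fin_dl)
  have b: "tv_cop (embed (dl a)) = tens (embed (dl a)) (dl []) + tens (dl []) (embed (dl a) :: _ \<Rightarrow> 'k)" for a
    by (simp only: embed_dl tv_cop_dl tv_cop_w_single tens_dl append_Nil)
  show ?thesis by (rule fs_linear_eq_on_basis[OF l1 l2 g b])
qed

lemma tv_mult_letter_apply:
  fixes f :: "'b list \<Rightarrow> 'k::field"
  assumes f: "fin f"
  shows "tv_mult (dl [x]) f w = (case w of [] \<Rightarrow> 0 | z # w' \<Rightarrow> if z = x then f w' else 0)"
proof -
  have "tv_mult (dl [x]) f = lext (\<lambda>v. tv_mult (dl [x]) (dl v)) f"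
    by (rule fs_linearD[OF tv_mult_linear_right f]) simp
  hence e: "tv_mult (dl [x]) f w = (\<Sum>v\<in>spt f. f v * dl (x # v) w)"
    by (simp add: lext_def)
  show ?thesis
  proof (cases w)
    case Nil thus ?thesis by (subst e) (simp add: dl_def)
  next
    case (Cons z w')
    have "(\<Sum>v\<in>spt f. f v * dl (x # v) w) = (\<Sum>v\<in>spt f. f v * (if v = w' then (if z = x then 1 else 0) else 0))"
      by (rule sum.cong) (auto simp: dl_def Cons)
    also have "\<dots> = f w' * (if z = x then 1 else 0)" by (rule sum_spt_delta[OF f])
    finally show ?thesis by (simp only: e) (simp add: Cons)
  qed
qed

lemma tv_mult_embed_dl_apply:
  fixes g :: "'b \<Rightarrow> 'k::field"
  assumes g: "fin g"
  shows "tv_mult (embed g) (dl u) w = (case w of [] \<Rightarrow> 0 | z # w' \<Rightarrow> if w' = u then g z else 0)"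
proof -
  have "tv_mult (embed g) (dl u) = lext (\<lambda>p. tv_mult (dl p) (dl u)) (embed g)"
    by (rule fs_linearD[OF tv_mult_linear_left]) (simp_all add: g)
  also have "\<dots> = lext (\<lambda>z. lext (\<lambda>p. dl (p @ u)) (dl [z])) g"
    unfolding embed_def by (simp add: lext_comp g)
  also have "\<dots> = lext (\<lambda>z. dl (z # u)) g" by simp
  finally have e: "tv_mult (embed g) (dl u) w = (\<Sum>z\<in>spt g. g z * dl (z # u) w)"
    by (simp add: lext_def)
  show ?thesis
  proof (cases w)
    case Nil thus ?thesis by (subst e) (simp add: dl_def)
  next
    case (Cons z w')
    have "(\<Sum>v\<in>spt g. g v * dl (v # u) w) = (\<Sum>v\<in>spt g. g v * (if v = z then (if w' = u then 1 else 0) else 0))"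
      by (rule sum.cong) (auto simp: dl_def Cons)
    also have "\<dots> = g z * (if w' = u then 1 else 0)" by (rule sum_spt_delta[OF g])
    finally show ?thesis by (simp only: e) (simp add: Cons)
  qed
qed

lemma zero_fun_eta[simp]: "(\<lambda>x. 0) = 0"
  by (simp add: zero_fun_def)

section \<open>The derivation extending the magmatic product by a letter\<close>

lemma card_compl_less: "S \<subseteq> {..<n} \<Longrightarrow> x \<in> S \<Longrightarrow> card {i. i < n \<and> i \<notin> S} < n"
proof -
  assume a: "S \<subseteq> {..<n}" "x \<in> S"
  have "{i. i < n \<and> i \<notin> S} \<subset> {..<n}" using a by auto
  hence "card {i. i < n \<and> i \<notin> S} < card {..<n}" by (intro psubset_card_mono) auto
  thus ?thesis by simp
qed

lemma card_sub_less: "S \<subseteq> {..<n} \<Longrightarrow> S \<noteq> {..<n} \<Longrightarrow> card {i. i < n \<and> i \<in> S} < n"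
proof -
  assume a: "S \<subseteq> {..<n}" "S \<noteq> {..<n}"
  have "{i. i < n \<and> i \<in> S} = S" using a(1) by auto
  moreover have "card S < card {..<n}" using a by (intro psubset_card_mono) auto
  ultimately show ?thesis by simp
qed

locale magmatic =
  fixes m :: "'b \<Rightarrow> 'b \<Rightarrow> 'b \<Rightarrow> 'k::field"
  assumes fin_structure_constants: "fin (m x y)"
begin

lemma tv_wl_Nil[simp]: "tv_wl m [] y = 0"
  by (rule ext) (simp add: tv_wl_def)

lemma tv_wl_Cons_apply_Cons:
  "tv_wl m (x # u) y (z # w') = (if w' = u then m x y z else 0) + (if z = x then tv_wl m u y w' else 0)"
proof -
  have "tv_wl m (x # u) y (z # w') = (\<Sum>i<Suc (length u).
      if length (z # w') = Suc (length u) \<and> take i (z # w') = take i (x # u) \<and> drop (Suc i) (z # w') = drop (Suc i) (x # u)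
      then m ((x # u) ! i) y ((z # w') ! i) else 0)"
    by (simp add: tv_wl_def)
  also have "\<dots> = (if w' = u then m x y z else 0) + (\<Sum>i<length u.
      if z = x \<and> (length w' = length u \<and> take i w' = take i u \<and> drop (Suc i) w' = drop (Suc i) u)
      then m (u ! i) y (w' ! i) else 0)"
    unfolding sum.lessThan_Suc_shift by (auto intro!: sum.cong)
  also have "(\<Sum>i<length u.
      if z = x \<and> (length w' = length u \<and> take i w' = take i u \<and> drop (Suc i) w' = drop (Suc i) u)
      then m (u ! i) y (w' ! i) else 0) = (if z = x then tv_wl m u y w' else 0)"
    by (auto simp: tv_wl_def intro!: sum.cong)
  finally show ?thesis .
qed

lemma tv_wl_Cons_apply:
  "tv_wl m (x # u) y w = (case w of [] \<Rightarrow> 0 | z # w' \<Rightarrow>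
       (if w' = u then m x y z else 0) + (if z = x then tv_wl m u y w' else 0))"
  by (cases w) (simp add: tv_wl_def, simp only: tv_wl_Cons_apply_Cons list.case)

lemma tv_wl_Cons_of_fin:
  assumes "fin (tv_wl m u y)"
  shows "tv_wl m (x # u) y = tv_mult (embed (m x y)) (dl u) + tv_mult (dl [x]) (tv_wl m u y)"
  by (rule ext) (simp add: tv_wl_Cons_apply tv_mult_embed_dl_apply fin_structure_constants tv_mult_letter_apply assms split: list.splits)

lemma fin_tv_wl[simp]: "fin (tv_wl m u y)"
proof (induction u)
  case Nil show ?case by (simp only: tv_wl_Nil fin_zero)
next
  case (Cons x u)
  show ?case unfolding tv_wl_Cons_of_fin[OF Cons.IH]
    by (rule fin_add; rule fin_tv_mult) (simp_all add: fin_structure_constants Cons.IH)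
qed

lemma tv_wl_Cons: "tv_wl m (x # u) y = tv_mult (embed (m x y)) (dl u) + tv_mult (dl [x]) (tv_wl m u y)"
  by (rule tv_wl_Cons_of_fin) simp

lemma tv_wl_single: "tv_wl m [x] y = embed (m x y)"
  by (simp add: tv_wl_Cons fin_structure_constants tv_mult_unit_right[unfolded tv_unit_def])

lemma tv_wl_append:
  "tv_wl m (u @ v) y = tv_mult (tv_wl m u y) (dl v) + tv_mult (dl u) (tv_wl m v y)"
proof (induction u)
  case Nil show ?case
    by (simp only: tv_wl_Nil tv_mult_zero_left append_Nil tv_mult_unit_left[unfolded tv_unit_def, OF fin_tv_wl] add_0_left)
next
  case (Cons x u)
  let ?E = "embed (m x y)"
  have fE: "fin ?E" by (simp add: fin_structure_constants)
  have a1: "tv_mult ?E (dl (u @ v)) = tv_mult (tv_mult ?E (dl u)) (dl v)"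
    by (simp add: tv_mult_assoc fE flip: tv_mult_dl)
  have a2: "tv_mult (dl [x]) (tv_mult (tv_wl m u y) (dl v)) = tv_mult (tv_mult (dl [x]) (tv_wl m u y)) (dl v)"
    by (simp add: tv_mult_assoc)
  have d: "dl (x # u) = tv_mult (dl [x]) (dl u)" by simp
  have a3: "tv_mult (dl [x]) (tv_mult (dl u) (tv_wl m v y)) = tv_mult (dl (x # u)) (tv_wl m v y)"
    by (simp only: d tv_mult_assoc[OF fin_dl fin_dl fin_tv_wl])
  have "tv_wl m ((x # u) @ v) y = tv_mult ?E (dl (u @ v)) + tv_mult (dl [x]) (tv_wl m (u @ v) y)"
    by (simp only: append_Cons tv_wl_Cons)
  also have "\<dots> = tv_mult ?E (dl (u @ v)) + tv_mult (dl [x]) (tv_mult (tv_wl m u y) (dl v) + tv_mult (dl u) (tv_wl m v y))"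
    by (simp only: Cons.IH)
  also have "\<dots> = tv_mult (tv_mult ?E (dl u)) (dl v)
      + (tv_mult (tv_mult (dl [x]) (tv_wl m u y)) (dl v) + tv_mult (dl (x # u)) (tv_wl m v y))"
    by (simp only: tv_mult_add_right[OF fin_dl fin_tv_mult[OF fin_tv_wl fin_dl] fin_tv_mult[OF fin_dl fin_tv_wl]] a1 a2 a3)
  also have "\<dots> = tv_mult (tv_mult ?E (dl u) + tv_mult (dl [x]) (tv_wl m u y)) (dl v) + tv_mult (dl (x # u)) (tv_wl m v y)"
    by (simp only: tv_mult_add_left[OF fin_tv_mult[OF fE fin_dl] fin_tv_mult[OF fin_dl fin_tv_wl] fin_dl] add.assoc)
  also have "\<dots> = tv_mult (tv_wl m (x # u) y) (dl v) + tv_mult (dl (x # u)) (tv_wl m v y)"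
    by (simp only: tv_wl_Cons)
  finally show ?case .
qed

lemma spt_tv_wl: "spt (tv_wl m u y) \<subseteq> {w. length w = length u}"
  by (auto simp: spt_def tv_wl_def intro: ccontr)

definition act_letter :: "('b list \<Rightarrow> 'k) \<Rightarrow> 'b \<Rightarrow> 'b list \<Rightarrow> 'k" where
  "act_letter f y = lext (\<lambda>v. tv_wl m v y) f"

lemma act_letter_dl[simp]: "act_letter (dl u) y = tv_wl m u y"
  by (simp add: act_letter_def)

lemma act_letter_linear: "fs_linear (\<lambda>f. act_letter f y)"
  by (simp add: act_letter_def)

lemma fin_act_letter[simp]: "fin f \<Longrightarrow> fin (act_letter f y)"
  by (simp add: act_letter_def)

lemma act_letter_tv_mult:
  assumes f: "fin f" and g: "fin g"
  shows "act_letter (tv_mult f g) y = tv_mult (act_letter f y) g + tv_mult f (act_letter g y)"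
proof (rule fs_bilinear_eq_on_basis[where P = "\<lambda>f g. act_letter (tv_mult f g) y" and Q = "\<lambda>f g. tv_mult (act_letter f y) g + tv_mult f (act_letter g y)", OF _ _ _ _ _ f g])
  fix g :: "'b list \<Rightarrow> 'k" assume g: "fin g"
  show "fs_linear (\<lambda>f. act_letter (tv_mult f g) y)" by (rule fs_linear_comp[OF act_letter_linear tv_mult_linear_left[OF g]]) (simp add: g)
  show "fs_linear (\<lambda>f. tv_mult (act_letter f y) g + tv_mult f (act_letter g y))"
    by (rule fs_linear_add[OF fs_linear_comp[OF tv_mult_linear_left[OF g] act_letter_linear] tv_mult_linear_left]) (simp_all add: g)
next
  fix a
  show "fs_linear (\<lambda>g. act_letter (tv_mult (dl a) g) y)" by (rule fs_linear_comp[OF act_letter_linear tv_mult_linear_right]) simp_all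
  show "fs_linear (\<lambda>g. tv_mult (act_letter (dl a) y) g + tv_mult (dl a) (act_letter g y))"
    by (rule fs_linear_add[OF tv_mult_linear_right fs_linear_comp[OF tv_mult_linear_right act_letter_linear]]) simp_all
next
  fix a b show "act_letter (tv_mult (dl a) (dl b)) y = tv_mult (act_letter (dl a) y) (dl b) + tv_mult (dl a) (act_letter (dl b) y)"
    by (simp add: tv_wl_append)
qed

lemma spt_act_letterD: "z \<in> spt (act_letter f y) \<Longrightarrow> \<exists>v\<in>spt f. z \<in> spt (tv_wl m v y)"
  unfolding act_letter_def by (rule spt_lextD)

definition act_letter2 :: "('b list \<times> 'b list \<Rightarrow> 'k) \<Rightarrow> 'b \<Rightarrow> 'b list \<times> 'b list \<Rightarrow> 'k" where
  "act_letter2 F y = lext (\<lambda>(a, b). tens (tv_wl m a y) (dl b) + tens (dl a) (tv_wl m b y)) F"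

lemma act_letter2_dl[simp]: "act_letter2 (dl (a, b)) y = tens (tv_wl m a y) (dl b) + tens (dl a) (tv_wl m b y)"
  by (rule ext) (simp add: act_letter2_def)

lemma act_letter2_linear: "fs_linear (\<lambda>F. act_letter2 F y)"
  by (simp add: act_letter2_def)

lemma fin_act_letter2[simp]: "fin F \<Longrightarrow> fin (act_letter2 F y)"
  by (simp add: act_letter2_def split_def)

lemma act_letter2_tens:
  fixes P Q :: "'b list \<Rightarrow> 'k"
  assumes P: "fin P" and Q: "fin Q"
  shows "act_letter2 (tens P Q) y = tens (act_letter P y) Q + tens P (act_letter Q y)"
proof (rule fs_bilinear_eq_on_basis[where P = "\<lambda>P Q. act_letter2 (tens P Q) y" and Q = "\<lambda>P Q. tens (act_letter P y) Q + tens P (act_letter Q y)", OF _ _ _ _ _ P Q])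
  fix Q :: "'b list \<Rightarrow> 'k" assume Q: "fin Q"
  show "fs_linear (\<lambda>P. act_letter2 (tens P Q) y)" by (rule fs_linear_comp[OF act_letter2_linear tens_linear_left[OF Q]]) (simp add: Q)
  show "fs_linear (\<lambda>P. tens (act_letter P y) Q + tens P (act_letter Q y))"
    by (rule fs_linear_add[OF fs_linear_comp[OF tens_linear_left[OF Q] act_letter_linear] tens_linear_left]) (simp_all add: Q)
next
  fix a
  show "fs_linear (\<lambda>Q. act_letter2 (tens (dl a) Q) y)" by (rule fs_linear_comp[OF act_letter2_linear tens_linear_right]) simp_all
  show "fs_linear (\<lambda>Q. tens (act_letter (dl a) y) Q + tens (dl a) (act_letter Q y))"
    by (rule fs_linear_add[OF tens_linear_right fs_linear_comp[OF tens_linear_right act_letter_linear]]) simp_all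
qed simp

lemma act_letter2_tv_mult2:
  fixes F G :: "'b list \<times> 'b list \<Rightarrow> 'k"
  assumes F: "fin F" and G: "fin G"
  shows "act_letter2 (tv_mult2 F G) y = tv_mult2 (act_letter2 F y) G + tv_mult2 F (act_letter2 G y)"
proof (rule fs_bilinear_eq_on_basis[where P = "\<lambda>F G. act_letter2 (tv_mult2 F G) y" and Q = "\<lambda>F G. tv_mult2 (act_letter2 F y) G + tv_mult2 F (act_letter2 G y)", OF _ _ _ _ _ F G])
  fix G :: "'b list \<times> 'b list \<Rightarrow> 'k" assume G: "fin G"
  show "fs_linear (\<lambda>F. act_letter2 (tv_mult2 F G) y)" by (rule fs_linear_comp[OF act_letter2_linear tv_mult2_linear_left[OF G]]) (simp add: G)
  show "fs_linear (\<lambda>F. tv_mult2 (act_letter2 F y) G + tv_mult2 F (act_letter2 G y))"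
    by (rule fs_linear_add[OF fs_linear_comp[OF tv_mult2_linear_left[OF G] act_letter2_linear] tv_mult2_linear_left]) (simp_all add: G)
next
  fix p
  show "fs_linear (\<lambda>G. act_letter2 (tv_mult2 (dl p) G) y)" by (rule fs_linear_comp[OF act_letter2_linear tv_mult2_linear_right]) simp_all
  show "fs_linear (\<lambda>G. tv_mult2 (act_letter2 (dl p) y) G + tv_mult2 (dl p) (act_letter2 G y))"
    by (rule fs_linear_add[OF tv_mult2_linear_right fs_linear_comp[OF tv_mult2_linear_right act_letter2_linear]]) simp_all
next
  fix p q :: "'b list \<times> 'b list"
  obtain a b where p: "p = (a, b)" by (cases p)
  obtain c d where q: "q = (c, d)" by (cases q)
  have t: "\<And>x y. dl (x, y) = tens (dl x) (dl y :: _ \<Rightarrow> 'k)" by simp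
  have e1: "tv_mult2 (act_letter2 (dl (a, b)) y) (dl (c, d)) = tens (tv_mult (tv_wl m a y) (dl c)) (dl (b @ d)) + tens (dl (a @ c)) (tv_mult (tv_wl m b y) (dl d))"
    by (simp only: act_letter2_dl t[of c d]) (simp add: tv_mult2_add_left tv_mult2_tens del: tens_dl)
  have e2: "tv_mult2 (dl (a, b)) (act_letter2 (dl (c, d)) y) = tens (tv_mult (dl a) (tv_wl m c y)) (dl (b @ d)) + tens (dl (a @ c)) (tv_mult (dl b) (tv_wl m d y))"
    by (simp only: act_letter2_dl t[of a b]) (simp add: tv_mult2_add_right tv_mult2_tens del: tens_dl)
  have e3: "act_letter2 (tv_mult2 (dl (a, b)) (dl (c, d))) y = tens (tv_mult (tv_wl m a y) (dl c)) (dl (b @ d)) + tens (tv_mult (dl a) (tv_wl m c y)) (dl (b @ d))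
     + (tens (dl (a @ c)) (tv_mult (tv_wl m b y) (dl d)) + tens (dl (a @ c)) (tv_mult (dl b) (tv_wl m d y)))"
    by (simp add: tv_wl_append tens_add_left tens_add_right del: tens_dl)
  show "act_letter2 (tv_mult2 (dl p) (dl q)) y = tv_mult2 (act_letter2 (dl p) y) (dl q) + tv_mult2 (dl p) (act_letter2 (dl q) y)"
    unfolding p q e1 e2 e3 by (simp only: add_ac)
qed

lemma tv_cop_tv_wl: "tv_cop (tv_wl m w y) = act_letter2 (tv_cop_w w) y"
proof (induction w rule: rev_induct)
  case Nil thus ?case by (simp add: tv_cop_w_eq_deshuffle_sum)
next
  case (snoc x w)
  let ?E = "embed (m x y)"
  have fE: "fin ?E" by (simp add: fin_structure_constants)
  have "tv_cop (tv_wl m (w @ [x]) y) = tv_cop (tv_mult (tv_wl m w y) (dl [x]) + tv_mult (dl w) ?E)"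
    by (simp add: tv_wl_append tv_wl_single)
  also have "\<dots> = tv_mult2 (act_letter2 (tv_cop_w w) y) (tv_cop_w [x]) + tv_mult2 (tv_cop_w w) (tv_cop ?E)"
    by (simp add: tv_cop_add tv_cop_mult fE snoc.IH)
  also have "tv_cop ?E = act_letter2 (tv_cop_w [x]) y"
    by (simp add: tv_cop_embed fin_structure_constants tv_cop_w_single tv_wl_single fs_linear_addD[OF act_letter2_linear] add.commute)
  also have "tv_mult2 (act_letter2 (tv_cop_w w) y) (tv_cop_w [x]) + tv_mult2 (tv_cop_w w) (act_letter2 (tv_cop_w [x]) y)
      = act_letter2 (tv_cop_w (w @ [x])) y"
    by (simp add: tv_cop_w_append act_letter2_tv_mult2)
  finally show ?case .
qed

lemma tv_cop_act_letter: "fin f \<Longrightarrow> tv_cop (act_letter f y) = act_letter2 (tv_cop f) y"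
  by (rule fs_linear_eq_on_basis[OF fs_linear_comp[OF tv_cop_linear act_letter_linear] fs_linear_comp[OF act_letter2_linear tv_cop_linear]]) (simp_all add: tv_cop_tv_wl)

lemma tv_wstar_Nil[simp]: "tv_wstar m u [] = dl u"
  by (simp add: tv_wstar_def)

lemma tv_wstar_snoc:
  "tv_wstar m u (w @ [y]) = act_letter (tv_wstar m u w) y - lext (tv_wstar m u) (tv_wl m w y)"
proof -
  have "tv_wstar m u (w @ [y]) = (\<lambda>z. act_letter (tv_W m (length w) u w) y z
        - lext (\<lambda>v. tv_W m (length w) u v) (tv_wl m w y) z)"
    by (simp add: tv_wstar_def act_letter_def)
  also have "lext (\<lambda>v. tv_W m (length w) u v) (tv_wl m w y) = lext (tv_wstar m u) (tv_wl m w y)"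
  proof (rule lext_cong)
    fix a assume "a \<in> spt (tv_wl m w y)"
    hence "length a = length w" using spt_tv_wl by blast
    thus "tv_W m (length w) u a = tv_wstar m u a" by (simp add: tv_wstar_def)
  qed
  finally show ?thesis by (simp add: tv_wstar_def fun_eq_iff)
qed

lemma fin_tv_wstar[simp]: "fin (tv_wstar m u w)"
proof (induction w rule: length_snoc_induct)
  case (snoc w y)
  have "fin (act_letter (tv_wstar m u w) y)" using snoc.IH by simp
  moreover have "fin (lext (tv_wstar m u) (tv_wl m w y))"
    by (rule fin_lext_on_spt) (use snoc.IH spt_tv_wl in auto)
  ultimately show ?case unfolding tv_wstar_snoc by (rule fin_diff)
qed simp

lemma tv_star_eq: "fin f \<Longrightarrow> fin g \<Longrightarrow> tv_star m f g = lext (\<lambda>u. lext (\<lambda>w. tv_wstar m u w) g) f"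
  unfolding tv_star_def by (simp add: lext_tens)

lemma tv_star_dl[simp]: "tv_star m (dl u) (dl w) = tv_wstar m u w"
  by (simp add: tv_star_def)

lemma tv_star_linear_left: "fin g \<Longrightarrow> fs_linear (\<lambda>f. tv_star m f g)"
  unfolding tv_star_def by (rule fs_linear_lext_tens_left)

lemma tv_star_linear_right: "fin f \<Longrightarrow> fs_linear (\<lambda>g. tv_star m f g)"
  unfolding tv_star_def by (rule fs_linear_lext_tens_right)

lemma fin_tv_star[simp]: "fin f \<Longrightarrow> fin g \<Longrightarrow> fin (tv_star m f g)"
  unfolding tv_star_def by (simp add: split_def)

lemma tv_star_dl_left: "fin g \<Longrightarrow> tv_star m (dl u) g = lext (tv_wstar m u) g"
  by (simp add: tv_star_eq)

lemma tv_star_Nil_right: "fin f \<Longrightarrow> tv_star m f (dl []) = f"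
  by (rule fs_linear_eq_on_basis[OF tv_star_linear_left fs_linear_id]) simp_all

lemma tv_star_snoc:
  assumes f: "fin f"
  shows "tv_star m f (dl (w @ [y])) = act_letter (tv_star m f (dl w)) y - tv_star m f (tv_wl m w y)"
proof (rule fs_linear_eq_on_basis[OF tv_star_linear_left _ f])
  show "fs_linear (\<lambda>f. act_letter (tv_star m f (dl w)) y - tv_star m f (tv_wl m w y))"
    by (rule fs_linear_diff[OF fs_linear_comp[OF act_letter_linear tv_star_linear_left] tv_star_linear_left]) simp_all
next
  fix a show "tv_star m (dl a) (dl (w @ [y])) = act_letter (tv_star m (dl a) (dl w)) y - tv_star m (dl a) (tv_wl m w y)"
    by (simp add: tv_wstar_snoc tv_star_dl_left)
qed simp

lemma tv_star_add_right: "fin f \<Longrightarrow> fin g \<Longrightarrow> fin g' \<Longrightarrow> tv_star m f (g + g') = tv_star m f g + tv_star m f g'"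
  by (rule fs_linear_addD[OF tv_star_linear_right])

lemma tv_star_diff_right: "fin f \<Longrightarrow> fin g \<Longrightarrow> fin g' \<Longrightarrow> tv_star m f (g - g') = tv_star m f g - tv_star m f g'"
  by (rule fs_linear_diffD[OF tv_star_linear_right])

lemma tv_star_mult_letter:
  assumes f: "fin f" and X: "fin X"
  shows "tv_star m f (tv_mult X (dl [y])) = act_letter (tv_star m f X) y - tv_star m f (act_letter X y)"
proof (rule fs_linear_eq_on_basis[OF fs_linear_comp[OF tv_star_linear_right[OF f] tv_mult_linear_left[OF fin_dl]] _ X])
  show "fs_linear (\<lambda>X. act_letter (tv_star m f X) y - tv_star m f (act_letter X y))"
    by (rule fs_linear_diff[OF fs_linear_comp[OF act_letter_linear tv_star_linear_right[OF f]] fs_linear_comp[OF tv_star_linear_right[OF f] act_letter_linear]]) (simp_all add: f)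
next
  fix a show "tv_star m f (tv_mult (dl a) (dl [y])) = act_letter (tv_star m f (dl a)) y - tv_star m f (act_letter (dl a) y)"
    by (simp add: tv_star_snoc f)
qed simp

lemma spt_tv_wstar_additive:
  fixes wd :: "'b list \<Rightarrow> nat"
  assumes wd0: "wd [] = 0" and wds: "\<And>w y. wd (w @ [y]) = wd w + wd [y]"
    and wdl: "\<And>v y z. z \<in> spt (tv_wl m v y) \<Longrightarrow> wd z = wd v + wd [y]"
  shows "spt (tv_wstar m u w) \<subseteq> {z. length z = length u \<and> wd z = wd u + wd w}"
proof (induction w rule: length_snoc_induct)
  case Nil
  then show ?case by (simp add: spt_dl wd0)
next
  case (snoc w y)
  show ?case
  proof
    fix z assume "z \<in> spt (tv_wstar m u (w @ [y]))"
    then have "z \<in> spt (act_letter (tv_wstar m u w) y) \<or> z \<in> spt (lext (tv_wstar m u) (tv_wl m w y))"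
      unfolding tv_wstar_snoc by (rule spt_diffD)
    then show "z \<in> {z. length z = length u \<and> wd z = wd u + wd (w @ [y])}"
    proof
      assume "z \<in> spt (act_letter (tv_wstar m u w) y)"
      then obtain v where v: "v \<in> spt (tv_wstar m u w)" "z \<in> spt (tv_wl m v y)"
        by (blast dest: spt_act_letterD)
      have "length z = length v" using v(2) spt_tv_wl by blast
      moreover have "length v = length u" "wd v = wd u + wd w" using v(1) snoc.IH[of w] by auto
      ultimately show ?thesis using wdl[OF v(2)] by (simp add: wds)
    next
      assume "z \<in> spt (lext (tv_wstar m u) (tv_wl m w y))"
      then obtain v where v: "v \<in> spt (tv_wl m w y)" "z \<in> spt (tv_wstar m u v)"
        by (blast dest: spt_lextD)
      have "length v = length w" using v(1) spt_tv_wl by blast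
      then have "length z = length u" "wd z = wd u + wd v" using v(2) snoc.IH[of v] by auto
      then show ?thesis using wdl[OF v(1)] by (simp add: wds)
    qed
  qed
qed

lemma spt_tv_wstar_length: "spt (tv_wstar m u w) \<subseteq> {z. length z = length u}"
  using spt_tv_wstar_additive[of "\<lambda>_. 0" u w] by auto

lemma tv_wl_at_Nil: "tv_wl m v y [] = 0"
  using spt_tv_wl[of v y] by (cases v) (auto simp: spt_def)

lemma act_letter_at_Nil: "act_letter f y [] = 0"
  by (simp add: act_letter_def lext_def tv_wl_at_Nil)

lemma tv_wstar_at_Nil: "tv_wstar m u w [] = (if u = [] \<and> w = [] then 1 else 0)"
proof (cases "u = []")
  case False
  then have "[] \<notin> spt (tv_wstar m u w)" using spt_tv_wstar_length by fastforce
  then show ?thesis using False by (simp add: spt_def)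
next
  case True
  have "tv_wstar m [] w [] = (if w = [] then 1 else 0)"
  proof (induction w rule: length_snoc_induct)
    case (snoc w y)
    have summand_0: "tv_wl m w y v * tv_wstar m [] v [] = 0" for v
    proof (cases "v = []")
      case False
      then show ?thesis
        using snoc.IH[of v] spt_tv_wl[of w y] by (cases "tv_wl m w y v = 0") (auto simp: spt_def)
    qed (simp add: tv_wl_at_Nil)
    have "lext (tv_wstar m []) (tv_wl m w y) [] = 0"
      unfolding lext_def by (intro sum.neutral ballI) (rule summand_0)
    then show ?case by (simp add: tv_wstar_snoc act_letter_at_Nil)
  qed (simp add: dl_def)
  then show ?thesis using True by simp
qed

theorem tv_eps_star:
  fixes f g :: "'b list \<Rightarrow> 'k"
  assumes f: "fin f" and g: "fin g"
  shows "tv_eps (tv_star m f g) = tv_eps f * tv_eps g"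
proof -
  have "tv_star m f g [] = (\<Sum>u\<in>spt f. f u * (\<Sum>w\<in>spt g. g w * tv_wstar m u w []))"
    by (simp add: tv_star_eq f g lext_def)
  also have "\<dots> = (\<Sum>u\<in>spt f. f u * (if u = [] then g [] * 1 else 0))"
  proof (rule sum.cong[OF refl])
    fix u
    have "(\<Sum>w\<in>spt g. g w * tv_wstar m u w []) = (\<Sum>w\<in>spt g. g w * (if w = [] then (if u = [] then 1 else 0) else 0))"
      by (rule sum.cong) (auto simp: tv_wstar_at_Nil)
    also have "\<dots> = g [] * (if u = [] then 1 else 0)" by (rule sum_spt_delta[OF g])
    finally show "f u * (\<Sum>w\<in>spt g. g w * tv_wstar m u w []) = f u * (if u = [] then g [] * 1 else 0)" by simp
  qed
  also have "\<dots> = f [] * (g [] * 1)" by (rule sum_spt_delta[OF f])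
  finally show ?thesis by (simp add: tv_eps_def)
qed

lemma tv_star2_dl[simp]: "tv_star2 m (dl (a, b)) (dl (c, d)) = tens (tv_wstar m a c) (tv_wstar m b d)"
  by (simp add: tv_star2_def)

lemma tv_star2_linear_left: "fin G \<Longrightarrow> fs_linear (\<lambda>F. tv_star2 m F G)"
  unfolding tv_star2_def by (rule fs_linear_lext_tens_left)

lemma tv_star2_linear_right: "fin F \<Longrightarrow> fs_linear (\<lambda>G. tv_star2 m F G)"
  unfolding tv_star2_def by (rule fs_linear_lext_tens_right)

lemma fin_tv_star2[simp]: "fin F \<Longrightarrow> fin G \<Longrightarrow> fin (tv_star2 m F G)"
  unfolding tv_star2_def by (simp add: split_def)

lemma tv_star2_tens:
  fixes f g h k :: "'b list \<Rightarrow> 'k"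
  assumes "fin f" "fin g" "fin h" "fin k"
  shows "tv_star2 m (tens f g) (tens h k) = tens (tv_star m f h) (tv_star m g k)"
  using lext_tens_tens[OF assms, of "tv_wstar m" "tv_wstar m"]
  by (simp add: tv_star2_def tv_star_def)

lemma tv_star2_Nil_right: "fin F \<Longrightarrow> tv_star2 m F (dl ([], [])) = F"
proof (rule fs_linear_eq_on_basis[OF tv_star2_linear_left fs_linear_id])
  fix p :: "'b list \<times> 'b list"
  obtain a b where "p = (a, b)" by (cases p)
  thus "tv_star2 m (dl p) (dl ([], [])) = dl p" by simp
qed simp_all

lemma tv_star2_add_right: "fin F \<Longrightarrow> fin G \<Longrightarrow> fin G' \<Longrightarrow> tv_star2 m F (G + G') = tv_star2 m F G + tv_star2 m F G'"
  by (rule fs_linear_addD[OF tv_star2_linear_right])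

lemma tv_star2_dl_mult2_letter:
  "tv_star2 m (dl (a, b)) (tv_mult2 (dl (c, d)) (tv_cop_w [y]))
   = act_letter2 (tv_star2 m (dl (a, b)) (dl (c, d))) y - tv_star2 m (dl (a, b)) (act_letter2 (dl (c, d)) y)"
proof -
  have s1: "tv_wstar m a (c @ [y]) = act_letter (tv_wstar m a c) y - tv_star m (dl a) (tv_wl m c y)"
    by (simp add: tv_wstar_snoc tv_star_dl_left)
  have s2: "tv_wstar m b (d @ [y]) = act_letter (tv_wstar m b d) y - tv_star m (dl b) (tv_wl m d y)"
    by (simp add: tv_wstar_snoc tv_star_dl_left)
  have l: "tv_star2 m (dl (a, b)) (tv_mult2 (dl (c, d)) (tv_cop_w [y]))
      = tens (act_letter (tv_wstar m a c) y) (tv_wstar m b d) - tens (tv_star m (dl a) (tv_wl m c y)) (tv_wstar m b d)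
        + (tens (tv_wstar m a c) (act_letter (tv_wstar m b d) y) - tens (tv_wstar m a c) (tv_star m (dl b) (tv_wl m d y)))"
    by (simp add: tv_cop_w_single tv_mult2_add_right tv_star2_add_right s1 s2 tens_diff_left tens_diff_right)
  have r1: "act_letter2 (tv_star2 m (dl (a, b)) (dl (c, d))) y
      = tens (act_letter (tv_wstar m a c) y) (tv_wstar m b d) + tens (tv_wstar m a c) (act_letter (tv_wstar m b d) y)"
    by (simp only: tv_star2_dl act_letter2_tens[OF fin_tv_wstar fin_tv_wstar])
  have "tv_star2 m (dl (a, b)) (act_letter2 (dl (c, d)) y)
      = tv_star2 m (tens (dl a) (dl b)) (tens (tv_wl m c y) (dl d) + tens (dl c) (tv_wl m d y))"
    by (simp only: act_letter2_dl tens_dl)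
  also have "\<dots> = tens (tv_star m (dl a) (tv_wl m c y)) (tv_wstar m b d) + tens (tv_wstar m a c) (tv_star m (dl b) (tv_wl m d y))"
    by (simp add: tv_star2_add_right tv_star2_tens del: tens_dl)
  finally show ?thesis unfolding l r1 by (simp add: algebra_simps)
qed

lemma tv_star2_mult2_letter:
  fixes F G :: "'b list \<times> 'b list \<Rightarrow> 'k"
  assumes F: "fin F" and G: "fin G"
  shows "tv_star2 m F (tv_mult2 G (tv_cop_w [y])) = act_letter2 (tv_star2 m F G) y - tv_star2 m F (act_letter2 G y)"
proof (rule fs_bilinear_eq_on_basis[where P = "\<lambda>F G. tv_star2 m F (tv_mult2 G (tv_cop_w [y]))" and Q = "\<lambda>F G. act_letter2 (tv_star2 m F G) y - tv_star2 m F (act_letter2 G y)", OF _ _ _ _ _ F G])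
  fix G :: "'b list \<times> 'b list \<Rightarrow> 'k" assume G: "fin G"
  show "fs_linear (\<lambda>F. tv_star2 m F (tv_mult2 G (tv_cop_w [y])))" by (rule tv_star2_linear_left) (simp add: G)
  show "fs_linear (\<lambda>F. act_letter2 (tv_star2 m F G) y - tv_star2 m F (act_letter2 G y))"
    by (rule fs_linear_diff[OF fs_linear_comp[OF act_letter2_linear tv_star2_linear_left[OF G]] tv_star2_linear_left]) (simp_all add: G)
next
  fix p
  show "fs_linear (\<lambda>G. tv_star2 m (dl p) (tv_mult2 G (tv_cop_w [y])))"
    by (rule fs_linear_comp[OF tv_star2_linear_right tv_mult2_linear_left]) simp_all
  show "fs_linear (\<lambda>G. act_letter2 (tv_star2 m (dl p) G) y - tv_star2 m (dl p) (act_letter2 G y))"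
    by (rule fs_linear_diff[OF fs_linear_comp[OF act_letter2_linear tv_star2_linear_right] fs_linear_comp[OF tv_star2_linear_right act_letter2_linear]]) simp_all
next
  fix p q :: "'b list \<times> 'b list"
  show "tv_star2 m (dl p) (tv_mult2 (dl q) (tv_cop_w [y])) = act_letter2 (tv_star2 m (dl p) (dl q)) y - tv_star2 m (dl p) (act_letter2 (dl q) y)"
    by (cases p, cases q) (simp only: tv_star2_dl_mult2_letter)
qed

theorem tv_cop_star:
  fixes f g :: "'b list \<Rightarrow> 'k"
  assumes f: "fin f" and g: "fin g"
  shows "tv_cop (tv_star m f g) = tv_star2 m (tv_cop f) (tv_cop g)"
proof (rule fs_linear_eq_on_basis[OF fs_linear_comp[OF tv_cop_linear tv_star_linear_left[OF g]] fs_linear_comp[OF tv_star2_linear_left tv_cop_linear] f])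
  fix u
  show "tv_cop (tv_star m (dl u) g) = tv_star2 m (tv_cop (dl u)) (tv_cop g)"
  proof (rule fs_linear_eq_by_length_induct[where LA = "\<lambda>g. tv_cop (tv_star m (dl u) g)" and LB = "\<lambda>g. tv_star2 m (tv_cop (dl u)) (tv_cop g)", OF _ _ _ _ g])
    show "fs_linear (\<lambda>g. tv_cop (tv_star m (dl u) g))" by (rule fs_linear_comp[OF tv_cop_linear tv_star_linear_right]) simp_all
    show "fs_linear (\<lambda>g. tv_star2 m (tv_cop (dl u)) (tv_cop g))" by (rule fs_linear_comp[OF tv_star2_linear_right tv_cop_linear]) simp_all
    show "tv_cop (tv_star m (dl u) (dl [])) = tv_star2 m (tv_cop (dl u)) (tv_cop (dl []))"
      by (simp add: tv_star_Nil_right tv_cop_w_eq_deshuffle_sum[of "[]"] tv_star2_Nil_right)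
  next
    fix w :: "'b list" and y :: 'b
    assume IH: "\<And>g. fin g \<Longrightarrow> spt g \<subseteq> {v. length v = length w} \<Longrightarrow>
      tv_cop (tv_star m (dl u) g) = tv_star2 m (tv_cop (dl u)) (tv_cop g)"
    have i1: "tv_cop (tv_star m (dl u) (dl w)) = tv_star2 m (tv_cop_w u) (tv_cop_w w)"
      using IH[of "dl w"] by (simp add: spt_dl)
    have i2: "tv_cop (tv_star m (dl u) (tv_wl m w y)) = tv_star2 m (tv_cop_w u) (act_letter2 (tv_cop_w w) y)"
      using IH[of "tv_wl m w y"] spt_tv_wl by (simp add: tv_cop_tv_wl)
    have "tv_cop (tv_star m (dl u) (dl (w @ [y]))) = act_letter2 (tv_star2 m (tv_cop_w u) (tv_cop_w w)) y - tv_star2 m (tv_cop_w u) (act_letter2 (tv_cop_w w) y)"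
      by (simp only: tv_star_snoc[OF fin_dl]) (simp add: tv_cop_diff tv_cop_act_letter i1 i2 del: tv_star_dl)
    also have "\<dots> = tv_star2 m (tv_cop_w u) (tv_mult2 (tv_cop_w w) (tv_cop_w [y]))"
      by (simp add: tv_star2_mult2_letter)
    also have "\<dots> = tv_star2 m (tv_cop (dl u)) (tv_cop (dl (w @ [y])))"
      by (simp add: tv_cop_w_append)
    finally show "tv_cop (tv_star m (dl u) (dl (w @ [y]))) = tv_star2 m (tv_cop (dl u)) (tv_cop (dl (w @ [y])))" .
  qed
qed (simp_all add: g)

section \<open>The Post-Hopf identities\<close>

text \<open>The right-hand sides of the two Post-Hopf identities, as linear functions of T = \<Delta>(h).\<close>

definition star_split :: "('b list \<Rightarrow> 'k) \<Rightarrow> ('b list \<Rightarrow> 'k) \<Rightarrow> ('b list \<times> 'b list \<Rightarrow> 'k) \<Rightarrow> 'b list \<Rightarrow> 'k" where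
  "star_split f g T = lext (\<lambda>(a, b). tv_mult (tv_star m f (dl a)) (tv_star m g (dl b))) T"

definition star_concat :: "('b list \<Rightarrow> 'k) \<Rightarrow> ('b list \<times> 'b list \<Rightarrow> 'k) \<Rightarrow> 'b list \<Rightarrow> 'k" where
  "star_concat g T = lext (\<lambda>(a, b). tv_mult (tv_star m g (dl a)) (dl b)) T"

lemma star_split_linear: "fs_linear (\<lambda>T. star_split f g T)" by (simp add: star_split_def)

lemma star_concat_linear: "fs_linear (\<lambda>T. star_concat g T)" by (simp add: star_concat_def)

lemma star_split_dl[simp]: "star_split f g (dl (a, b)) = tv_mult (tv_star m f (dl a)) (tv_star m g (dl b))" by (simp add: star_split_def)

lemma star_concat_dl[simp]: "star_concat g (dl (a, b)) = tv_mult (tv_star m g (dl a)) (dl b)" by (simp add: star_concat_def)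

lemma fin_star_split[simp]: "fin f \<Longrightarrow> fin g \<Longrightarrow> fin T \<Longrightarrow> fin (star_split f g T)" by (simp add: star_split_def split_def)

lemma fin_star_concat[simp]: "fin g \<Longrightarrow> fin T \<Longrightarrow> fin (star_concat g T)" by (simp add: star_concat_def split_def)

lemma star_split_tens:
  fixes P Q :: "'b list \<Rightarrow> 'k"
  assumes f: "fin f" and g: "fin g" and P: "fin P" and Q: "fin Q"
  shows "star_split f g (tens P Q) = tv_mult (tv_star m f P) (tv_star m g Q)"
proof (rule fs_bilinear_eq_on_basis[where P = "\<lambda>P Q. star_split f g (tens P Q)" and Q = "\<lambda>P Q. tv_mult (tv_star m f P) (tv_star m g Q)", OF _ _ _ _ _ P Q])
  fix Q :: "'b list \<Rightarrow> 'k" assume Q: "fin Q"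
  show "fs_linear (\<lambda>P. star_split f g (tens P Q))" by (rule fs_linear_comp[OF star_split_linear tens_linear_left[OF Q]]) (simp add: Q)
  show "fs_linear (\<lambda>P. tv_mult (tv_star m f P) (tv_star m g Q))"
    by (rule fs_linear_comp[OF tv_mult_linear_left tv_star_linear_right[OF f]]) (simp_all add: f g Q)
next
  fix a
  show "fs_linear (\<lambda>Q. star_split f g (tens (dl a) Q))" by (rule fs_linear_comp[OF star_split_linear tens_linear_right]) simp_all
  show "fs_linear (\<lambda>Q. tv_mult (tv_star m f (dl a)) (tv_star m g Q))"
    by (rule fs_linear_comp[OF tv_mult_linear_right tv_star_linear_right[OF g]]) (simp_all add: f g)
qed simp

lemma star_concat_tens:
  fixes P Q :: "'b list \<Rightarrow> 'k"
  assumes g: "fin g" and P: "fin P" and Q: "fin Q"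
  shows "star_concat g (tens P Q) = tv_mult (tv_star m g P) Q"
proof (rule fs_bilinear_eq_on_basis[where P = "\<lambda>P Q. star_concat g (tens P Q)" and Q = "\<lambda>P Q. tv_mult (tv_star m g P) Q", OF _ _ _ _ _ P Q])
  fix Q :: "'b list \<Rightarrow> 'k" assume Q: "fin Q"
  show "fs_linear (\<lambda>P. star_concat g (tens P Q))" by (rule fs_linear_comp[OF star_concat_linear tens_linear_left[OF Q]]) (simp add: Q)
  show "fs_linear (\<lambda>P. tv_mult (tv_star m g P) Q)"
    by (rule fs_linear_comp[OF tv_mult_linear_left[OF Q] tv_star_linear_right[OF g]]) (simp_all add: g)
next
  fix a
  show "fs_linear (\<lambda>Q. star_concat g (tens (dl a) Q))" by (rule fs_linear_comp[OF star_concat_linear tens_linear_right]) simp_all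
  show "fs_linear (\<lambda>Q. tv_mult (tv_star m g (dl a)) Q)"
    by (rule tv_mult_linear_right) (simp add: g)
qed simp

lemma star_split_add: "fin S \<Longrightarrow> fin T \<Longrightarrow> star_split f g (S + T) = star_split f g S + star_split f g T"
  by (rule fs_linear_addD[OF star_split_linear])

lemma star_concat_add: "fin S \<Longrightarrow> fin T \<Longrightarrow> star_concat g (S + T) = star_concat g S + star_concat g T"
  by (rule fs_linear_addD[OF star_concat_linear])

lemma star_split_mult2_letter:
  assumes f: "fin f" and g: "fin g" and T: "fin T"
  shows "star_split f g (tv_mult2 T (tv_cop_w [y])) = act_letter (star_split f g T) y - star_split f g (act_letter2 T y)"
proof (rule fs_linear_eq_on_basis[OF fs_linear_comp[OF star_split_linear tv_mult2_linear_left] _ T])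
  show "fs_linear (\<lambda>T. act_letter (star_split f g T) y - star_split f g (act_letter2 T y))"
    by (rule fs_linear_diff[OF fs_linear_comp[OF act_letter_linear star_split_linear] fs_linear_comp[OF star_split_linear act_letter2_linear]]) (simp_all add: f g)
next
  fix p :: "'b list \<times> 'b list"
  obtain a b where p: "p = (a, b)" by (cases p)
  let ?A = "tv_star m f (dl a)" and ?B = "tv_star m g (dl b)"
  have l: "star_split f g (tv_mult2 (dl (a, b)) (tv_cop_w [y]))
      = tv_mult (act_letter ?A y) ?B - tv_mult (tv_star m f (tv_wl m a y)) ?B
        + (tv_mult ?A (act_letter ?B y) - tv_mult ?A (tv_star m g (tv_wl m b y)))"
    by (simp add: tv_cop_w_single tv_mult2_add_right star_split_add tv_star_snoc f g tv_mult_diff_left tv_mult_diff_right del: tv_star_dl)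
  have r: "act_letter (star_split f g (dl (a, b))) y - star_split f g (act_letter2 (dl (a, b)) y)
      = tv_mult (act_letter ?A y) ?B + tv_mult ?A (act_letter ?B y)
        - (tv_mult (tv_star m f (tv_wl m a y)) ?B + tv_mult ?A (tv_star m g (tv_wl m b y)))"
    by (simp add: act_letter_tv_mult f g star_split_add star_split_tens tv_star_Nil_right del: tv_star_dl)
  show "star_split f g (tv_mult2 (dl p) (tv_cop_w [y])) = act_letter (star_split f g (dl p)) y - star_split f g (act_letter2 (dl p) y)"
    unfolding p l r by (simp add: algebra_simps)
qed (simp_all add: f g)

theorem tv_star_mult:
  fixes f g h :: "'b list \<Rightarrow> 'k"
  assumes f: "fin f" and g: "fin g" and h: "fin h"
  shows "tv_star m (tv_mult f g) h = star_split f g (tv_cop h)"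
proof (rule fs_linear_eq_by_length_induct[where LA = "\<lambda>h. tv_star m (tv_mult f g) h" and LB = "\<lambda>h. star_split f g (tv_cop h)", OF _ _ _ _ h])
  show "fs_linear (\<lambda>h. tv_star m (tv_mult f g) h)" by (rule tv_star_linear_right) (simp add: f g)
  show "fs_linear (\<lambda>h. star_split f g (tv_cop h))" by (rule fs_linear_comp[OF star_split_linear tv_cop_linear]) simp
  show "tv_star m (tv_mult f g) (dl []) = star_split f g (tv_cop (dl []))"
    by (simp add: tv_star_Nil_right f g tv_cop_w_eq_deshuffle_sum[of "[]"] del: tv_star_dl)
next
  fix w :: "'b list" and y :: 'b
  assume IH: "\<And>h. fin h \<Longrightarrow> spt h \<subseteq> {v. length v = length w} \<Longrightarrow>
    tv_star m (tv_mult f g) h = star_split f g (tv_cop h)"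
  have i1: "tv_star m (tv_mult f g) (dl w) = star_split f g (tv_cop_w w)"
    using IH[of "dl w"] by (simp add: spt_dl)
  have i2: "tv_star m (tv_mult f g) (tv_wl m w y) = star_split f g (act_letter2 (tv_cop_w w) y)"
    using IH[of "tv_wl m w y"] spt_tv_wl by (simp add: tv_cop_tv_wl)
  have "tv_star m (tv_mult f g) (dl (w @ [y])) = act_letter (star_split f g (tv_cop_w w)) y - star_split f g (act_letter2 (tv_cop_w w) y)"
    by (simp only: tv_star_snoc[OF fin_tv_mult[OF f g]] i1 i2)
  also have "\<dots> = star_split f g (tv_mult2 (tv_cop_w w) (tv_cop_w [y]))"
    by (simp add: star_split_mult2_letter f g)
  also have "\<dots> = star_split f g (tv_cop (dl (w @ [y])))"
    by (simp add: tv_cop_w_append)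
  finally show "tv_star m (tv_mult f g) (dl (w @ [y])) = star_split f g (tv_cop (dl (w @ [y])))" .
qed

lemma star_concat_mult2_letter:
  assumes g: "fin g" and T: "fin T"
  shows "star_concat g (tv_mult2 T (tv_cop_w [y])) = act_letter (star_concat g T) y + tv_mult (star_concat g T) (dl [y]) - star_concat g (act_letter2 T y)"
proof (rule fs_linear_eq_on_basis[OF fs_linear_comp[OF star_concat_linear tv_mult2_linear_left] _ T])
  show "fs_linear (\<lambda>T. act_letter (star_concat g T) y + tv_mult (star_concat g T) (dl [y]) - star_concat g (act_letter2 T y))"
    by (rule fs_linear_diff[OF fs_linear_add[OF fs_linear_comp[OF act_letter_linear star_concat_linear] fs_linear_comp[OF tv_mult_linear_left star_concat_linear]] fs_linear_comp[OF star_concat_linear act_letter2_linear]])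
       (simp_all add: g)
next
  fix p :: "'b list \<times> 'b list"
  obtain a b where p: "p = (a, b)" by (cases p)
  let ?A = "tv_star m g (dl a)"
  have l: "star_concat g (tv_mult2 (dl (a, b)) (tv_cop_w [y]))
      = tv_mult (act_letter ?A y) (dl b) - tv_mult (tv_star m g (tv_wl m a y)) (dl b)
        + tv_mult (tv_mult ?A (dl b)) (dl [y])"
    by (simp add: tv_cop_w_single tv_mult2_add_right star_concat_add tv_star_snoc g tv_mult_diff_left tv_mult_assoc del: tv_star_dl)
  have r: "act_letter (star_concat g (dl (a, b))) y + tv_mult (star_concat g (dl (a, b))) (dl [y]) - star_concat g (act_letter2 (dl (a, b)) y)
      = tv_mult (act_letter ?A y) (dl b) + tv_mult ?A (tv_wl m b y) + tv_mult (tv_mult ?A (dl b)) (dl [y])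
        - (tv_mult (tv_star m g (tv_wl m a y)) (dl b) + tv_mult ?A (tv_wl m b y))"
    by (simp add: act_letter_tv_mult g star_concat_add star_concat_tens tv_star_Nil_right del: tv_star_dl)
  show "star_concat g (tv_mult2 (dl p) (tv_cop_w [y])) = act_letter (star_concat g (dl p)) y + tv_mult (star_concat g (dl p)) (dl [y]) - star_concat g (act_letter2 (dl p) y)"
    unfolding p l r by (simp add: algebra_simps)
qed (simp_all add: g)

theorem tv_star_star:
  fixes f g h :: "'b list \<Rightarrow> 'k"
  assumes f: "fin f" and g: "fin g" and h: "fin h"
  shows "tv_star m (tv_star m f g) h = tv_star m f (star_concat g (tv_cop h))"
proof (rule fs_linear_eq_by_length_induct[where LA = "\<lambda>h. tv_star m (tv_star m f g) h" and LB = "\<lambda>h. tv_star m f (star_concat g (tv_cop h))", OF _ _ _ _ h])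
  show "fs_linear (\<lambda>h. tv_star m (tv_star m f g) h)" by (rule tv_star_linear_right) (simp add: f g)
  show "fs_linear (\<lambda>h. tv_star m f (star_concat g (tv_cop h)))"
    by (rule fs_linear_comp[OF tv_star_linear_right[OF f] fs_linear_comp[OF star_concat_linear tv_cop_linear]]) (simp_all add: g)
  show "tv_star m (tv_star m f g) (dl []) = tv_star m f (star_concat g (tv_cop (dl [])))"
    by (simp add: tv_star_Nil_right f g tv_cop_w_eq_deshuffle_sum[of "[]"] tv_mult_unit_right[unfolded tv_unit_def] del: tv_star_dl)
next
  fix w :: "'b list" and y :: 'b
  assume IH: "\<And>h. fin h \<Longrightarrow> spt h \<subseteq> {v. length v = length w} \<Longrightarrow>
    tv_star m (tv_star m f g) h = tv_star m f (star_concat g (tv_cop h))"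
  let ?X = "star_concat g (tv_cop_w w)"
  have fX: "fin ?X" by (simp add: g)
  have i1: "tv_star m (tv_star m f g) (dl w) = tv_star m f ?X"
    using IH[of "dl w"] by (simp add: spt_dl)
  have i2: "tv_star m (tv_star m f g) (tv_wl m w y) = tv_star m f (star_concat g (act_letter2 (tv_cop_w w) y))"
    using IH[of "tv_wl m w y"] spt_tv_wl by (simp add: tv_cop_tv_wl)
  have "tv_star m (tv_star m f g) (dl (w @ [y])) = act_letter (tv_star m f ?X) y - tv_star m f (star_concat g (act_letter2 (tv_cop_w w) y))"
    by (simp only: tv_star_snoc[OF fin_tv_star[OF f g]] i1 i2)
  also have "\<dots> = tv_star m f (act_letter ?X y) + (act_letter (tv_star m f ?X) y - tv_star m f (act_letter ?X y))
      - tv_star m f (star_concat g (act_letter2 (tv_cop_w w) y))"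
    by (simp add: algebra_simps)
  also have "\<dots> = tv_star m f (act_letter ?X y) + tv_star m f (tv_mult ?X (dl [y]))
      - tv_star m f (star_concat g (act_letter2 (tv_cop_w w) y))"
    by (simp add: tv_star_mult_letter f fX)
  also have "\<dots> = tv_star m f (act_letter ?X y + tv_mult ?X (dl [y]) - star_concat g (act_letter2 (tv_cop_w w) y))"
    by (simp add: tv_star_add_right tv_star_diff_right f g fX)
  also have "\<dots> = tv_star m f (star_concat g (tv_mult2 (tv_cop_w w) (tv_cop_w [y])))"
    by (simp add: star_concat_mult2_letter g)
  also have "\<dots> = tv_star m f (star_concat g (tv_cop (dl (w @ [y]))))"
    by (simp add: tv_cop_w_append)
  finally show "tv_star m (tv_star m f g) (dl (w @ [y])) = tv_star m f (star_concat g (tv_cop (dl (w @ [y]))))" .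
qed

section \<open>The convolution inverse of gamma\<close>

definition counit_op :: "'b list \<Rightarrow> ('b list \<Rightarrow> 'k) \<Rightarrow> 'b list \<Rightarrow> 'k" where
  "counit_op w y = (if w = [] then y else 0)"

text \<open>
  These recursions solve \<gamma> \<star> \<beta> = \<epsilon> and \<beta> \<star> \<gamma> = \<epsilon> for \<beta>: the deshuffle term excluded
  from the sum is \<beta>(w) itself, because \<gamma>([]) is the identity.
\<close>

function beta_right :: "'b list \<Rightarrow> ('b list \<Rightarrow> 'k) \<Rightarrow> 'b list \<Rightarrow> 'k" where
  "beta_right w y = counit_op w y - (\<Sum>S\<in>Pow {..<length w} - {{}}.
      tv_star m (beta_right (nths w ({..<length w} - S)) y) (dl (nths w S)))"
  by auto
termination
  by (relation "measure (\<lambda>(w, y). length w)") (auto simp: length_nths card_compl_less)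

function beta_left :: "'b list \<Rightarrow> ('b list \<Rightarrow> 'k) \<Rightarrow> 'b list \<Rightarrow> 'k" where
  "beta_left w y = counit_op w y - (\<Sum>S\<in>Pow {..<length w} - {{..<length w}}.
      beta_left (nths w S) (tv_star m y (dl (nths w ({..<length w} - S)))))"
  by auto
termination
  by (relation "measure (\<lambda>(w, y). length w)") (auto simp: length_nths card_sub_less)

declare beta_right.simps[simp del] beta_left.simps[simp del]

lemma counit_op_linear: "fs_linear (\<lambda>y. counit_op w y)"
proof (cases "w = []")
  case True thus ?thesis by (simp add: counit_op_def fs_linear_id)
next
  case False thus ?thesis using fs_linear_zero by (simp add: counit_op_def)
qed

lemma fin_counit_op[simp]: "fin y \<Longrightarrow> fin (counit_op w y)"
  by (simp add: counit_op_def)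

lemma beta_right_linear_fin: "fs_linear (beta_right w) \<and> (\<forall>y. fin y \<longrightarrow> fin (beta_right w y))"
proof (induction w rule: length_induct)
  case (1 w)
  let ?n = "length w"
  have IH: "fs_linear (beta_right (nths w ({..<?n} - S))) \<and> (\<forall>y. fin y \<longrightarrow> fin (beta_right (nths w ({..<?n} - S)) y))"
    if "S \<in> Pow {..<?n} - {{}}" for S
    using 1 that by (auto simp: length_nths card_compl_less)
  have e: "beta_right w = (\<lambda>y. counit_op w y - (\<Sum>S\<in>Pow {..<?n} - {{}}. tv_star m (beta_right (nths w ({..<?n} - S)) y) (dl (nths w S))))"
    by (rule ext) (rule beta_right.simps)
  show ?case
  proof
    show "fs_linear (beta_right w)"
      unfolding e
    proof (rule fs_linear_diff[OF counit_op_linear fs_linear_sum])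
      fix S assume S: "S \<in> Pow {..<?n} - {{}}"
      show "fs_linear (\<lambda>y. tv_star m (beta_right (nths w ({..<?n} - S)) y) (dl (nths w S)))"
        by (rule fs_linear_comp[OF tv_star_linear_left[OF fin_dl]]) (use IH[OF S] in auto)
    qed
    show "\<forall>y. fin y \<longrightarrow> fin (beta_right w y)"
      using IH by (subst beta_right.simps) (auto intro!: fin_diff fin_sum fin_tv_star)
  qed
qed

lemma beta_right_linear: "fs_linear (beta_right w)" using beta_right_linear_fin by blast

lemma fin_beta_right[simp]: "fin y \<Longrightarrow> fin (beta_right w y)" using beta_right_linear_fin by blast

lemma beta_left_linear_fin: "fs_linear (beta_left w) \<and> (\<forall>y. fin y \<longrightarrow> fin (beta_left w y))"
proof (induction w rule: length_induct)
  case (1 w)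
  let ?n = "length w"
  have IH: "fs_linear (beta_left (nths w S)) \<and> (\<forall>y. fin y \<longrightarrow> fin (beta_left (nths w S) y))"
    if "S \<in> Pow {..<?n} - {{..<?n}}" for S
    using 1 that by (auto simp: length_nths card_sub_less)
  have e: "beta_left w = (\<lambda>y. counit_op w y - (\<Sum>S\<in>Pow {..<?n} - {{..<?n}}. beta_left (nths w S) (tv_star m y (dl (nths w ({..<?n} - S))))))"
    by (rule ext) (rule beta_left.simps)
  show ?case
  proof
    show "fs_linear (beta_left w)"
      unfolding e
    proof (rule fs_linear_diff[OF counit_op_linear fs_linear_sum])
      fix S assume S: "S \<in> Pow {..<?n} - {{..<?n}}"
      show "fs_linear (\<lambda>y. beta_left (nths w S) (tv_star m y (dl (nths w ({..<?n} - S)))))"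
        by (rule fs_linear_comp[OF _ tv_star_linear_left[OF fin_dl]]) (use IH[OF S] in auto)
    qed
    show "\<forall>y. fin y \<longrightarrow> fin (beta_left w y)"
      by (subst beta_left.simps, intro allI impI fin_diff fin_sum) (simp_all add: IH)
  qed
qed

lemma beta_left_linear: "fs_linear (beta_left w)" using beta_left_linear_fin by blast

lemma fin_beta_left[simp]: "fin y \<Longrightarrow> fin (beta_left w y)" using beta_left_linear_fin by blast

text \<open>Convolution in Hom(H, End H), each map given by its values on basis words.\<close>

definition convol :: "('b list \<Rightarrow> ('b list \<Rightarrow> 'k) \<Rightarrow> 'b list \<Rightarrow> 'k) \<Rightarrow> ('b list \<Rightarrow> ('b list \<Rightarrow> 'k) \<Rightarrow> 'b list \<Rightarrow> 'k)
    \<Rightarrow> 'b list \<Rightarrow> ('b list \<Rightarrow> 'k) \<Rightarrow> 'b list \<Rightarrow> 'k" where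
  "convol F G w y = deshuffle_sum (\<lambda>a b. F a (G b y)) w"

definition gamma_op :: "'b list \<Rightarrow> ('b list \<Rightarrow> 'k) \<Rightarrow> 'b list \<Rightarrow> 'k" where
  "gamma_op a y = tv_star m y (dl a)"

lemma convol_gamma_beta_right: "fin y \<Longrightarrow> convol gamma_op beta_right w y = counit_op w y"
proof -
  assume y: "fin y"
  have "convol gamma_op beta_right w y = beta_right w y + (\<Sum>S\<in>Pow {..<length w} - {{}}.
      tv_star m (beta_right (nths w ({..<length w} - S)) y) (dl (nths w S)))"
    unfolding convol_def gamma_op_def by (subst deshuffle_sum_split_Nil_left) (simp add: tv_star_Nil_right y)
  also have "\<dots> = counit_op w y" using beta_right.simps[of w y] by simp
  finally show ?thesis .
qed

lemma convol_beta_left_gamma: "fin y \<Longrightarrow> convol beta_left gamma_op w y = counit_op w y"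
proof -
  assume y: "fin y"
  have "convol beta_left gamma_op w y = beta_left w y + (\<Sum>S\<in>Pow {..<length w} - {{..<length w}}.
      beta_left (nths w S) (tv_star m y (dl (nths w ({..<length w} - S)))))"
    unfolding convol_def gamma_op_def by (subst deshuffle_sum_split_Nil_right) (simp add: tv_star_Nil_right y)
  also have "\<dots> = counit_op w y" using beta_left.simps[of w y] by simp
  finally show ?thesis .
qed

lemma convol_assoc:
  assumes F: "\<And>a. fs_linear (F a)" and G: "\<And>a z. fin z \<Longrightarrow> fin (G a z)" and H: "\<And>a z. fin z \<Longrightarrow> fin (H a z)"
    and y: "fin y"
  shows "convol (convol F G) H w y = convol F (convol G H) w y"
proof -
  have "convol F (convol G H) w y = deshuffle_sum (\<lambda>a b. F a (deshuffle_sum (\<lambda>c d. G c (H d y)) b)) w"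
    by (simp add: convol_def)
  also have "\<dots> = deshuffle_sum (\<lambda>a b. deshuffle_sum (\<lambda>c d. F a (G c (H d y))) b) w"
    by (rule deshuffle_sum_cong) (rule fs_linear_deshuffle_sum[OF F], simp add: G H y)
  also have "\<dots> = deshuffle_sum (\<lambda>a b. deshuffle_sum (\<lambda>c d. F c (G d (H b y))) a) w"
    by (rule deshuffle_sum_coassoc[symmetric])
  also have "\<dots> = convol (convol F G) H w y" by (simp add: convol_def)
  finally show ?thesis by simp
qed

lemma convol_counit_left: "convol counit_op F w y = F w y"
  unfolding convol_def counit_op_def by (rule deshuffle_sum_counit_left)

lemma convol_counit_right: "(\<And>a. fs_linear (F a)) \<Longrightarrow> convol F counit_op w y = F w y"
proof -
  assume F: "\<And>a. fs_linear (F a)"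
  have "convol F counit_op w y = deshuffle_sum (\<lambda>a b. if b = [] then F a y else 0) w"
    unfolding convol_def counit_op_def by (rule deshuffle_sum_cong) (simp add: fs_linear_zeroD[OF F])
  thus ?thesis by (simp add: deshuffle_sum_counit_right)
qed

lemma beta_left_eq_beta_right: "fin y \<Longrightarrow> beta_left w y = beta_right w y"
proof -
  assume y: "fin y"
  have "beta_left w y = convol beta_left counit_op w y" by (simp add: convol_counit_right beta_left_linear)
  also have "\<dots> = convol beta_left (convol gamma_op beta_right) w y"
    unfolding convol_def[of beta_left] by (rule deshuffle_sum_cong) (simp add: convol_gamma_beta_right y)
  also have "\<dots> = convol (convol beta_left gamma_op) beta_right w y"
    by (rule convol_assoc[symmetric]) (simp_all add: beta_left_linear gamma_op_def y)
  also have "\<dots> = convol counit_op beta_right w y"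
    unfolding convol_def[of "convol beta_left gamma_op"] convol_def[of counit_op] by (rule deshuffle_sum_cong) (simp add: convol_beta_left_gamma y)
  also have "\<dots> = beta_right w y" by (rule convol_counit_left)
  finally show ?thesis .
qed

lemma gamma_beta_right_inverse:
  assumes x: "fin x" and y: "fin y"
  shows "lext (\<lambda>(a, b). tv_star m (beta_right b y) (dl a)) (tv_cop x) = (\<lambda>z. tv_eps x * y z)"
proof -
  have "lext (\<lambda>(a, b). tv_star m (beta_right b y) (dl a)) (tv_cop x)
      = lext (\<lambda>w. convol gamma_op beta_right w y) x"
    by (simp add: lext_tv_cop x convol_def gamma_op_def)
  also have "\<dots> = lext (\<lambda>w. if w = [] then y else 0) x"
    by (simp add: convol_gamma_beta_right y counit_op_def)
  also have "\<dots> = (\<lambda>z. tv_eps x * y z)"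
    by (simp add: lext_if_Nil x tv_eps_def scale_vec_def)
  finally show ?thesis .
qed

lemma beta_right_gamma_inverse:
  assumes x: "fin x" and y: "fin y"
  shows "lext (\<lambda>(a, b). beta_right a (tv_star m y (dl b))) (tv_cop x) = (\<lambda>z. tv_eps x * y z)"
proof -
  have "lext (\<lambda>(a, b). beta_right a (tv_star m y (dl b))) (tv_cop x)
      = lext (\<lambda>w. convol beta_left gamma_op w y) x"
    by (simp add: lext_tv_cop x y convol_def gamma_op_def beta_left_eq_beta_right)
  also have "\<dots> = lext (\<lambda>w. if w = [] then y else 0) x"
    by (simp add: convol_beta_left_gamma y counit_op_def)
  also have "\<dots> = (\<lambda>z. tv_eps x * y z)"
    by (simp add: lext_if_Nil x tv_eps_def scale_vec_def)
  finally show ?thesis .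
qed

theorem right_post_hopf_tensor_algebra: "tv_right_post_hopf m"
  unfolding tv_right_post_hopf_def
proof (intro conjI allI impI)
  fix f g h :: "'b list \<Rightarrow> 'k" assume "fin f \<and> fin g \<and> fin h"
  then show "tv_star m (tv_mult f g) h
        = lext (\<lambda>(a, b). tv_mult (tv_star m f (dl a)) (tv_star m g (dl b))) (tv_cop h)"
    and "tv_star m (tv_star m f g) h
        = tv_star m f (lext (\<lambda>(a, b). tv_mult (tv_star m g (dl a)) (dl b)) (tv_cop h))"
    by (simp_all add: tv_star_mult star_split_def tv_star_star star_concat_def)
next
  have matrix: "lext (\<lambda>v. beta_right w (dl v)) y = beta_right w y" if "fin y" for w y
    by (rule fs_linearD[OF beta_right_linear that, symmetric])
  show "\<exists>bt :: 'b list \<Rightarrow> 'b list \<Rightarrow> 'b list \<Rightarrow> 'k. (\<forall>w v. fin (bt w v)) \<and>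
        (\<forall>x y. fin x \<and> fin y \<longrightarrow>
          lext (\<lambda>(a, b). tv_star m (lext (bt b) y) (dl a)) (tv_cop x) = (\<lambda>z. tv_eps x * y z) \<and>
          lext (\<lambda>(a, b). lext (bt a) (tv_star m y (dl b))) (tv_cop x) = (\<lambda>z. tv_eps x * y z))"
    by (intro exI[of _ "\<lambda>w v. beta_right w (dl v)"])
      (simp add: matrix gamma_beta_right_inverse beta_right_gamma_inverse)
qed (simp_all add: hopf_tensor_algebra tv_cop_star tv_eps_star)

end

lemma wdeg_append[simp]: "wdeg deg (u @ v) = wdeg deg u + wdeg deg v"
  by (simp add: wdeg_def)

lemma wdeg_Nil[simp]: "wdeg deg [] = 0"
  by (simp add: wdeg_def)

lemma wdeg_Cons[simp]: "wdeg deg (x # v) = deg x + wdeg deg v"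
  by (simp add: wdeg_def)

lemma wdeg_nths: "wdeg deg (nths w S) + wdeg deg (nths w ({..<length w} - S)) = wdeg deg w"
proof (induction w arbitrary: S rule: rev_induct)
  case Nil thus ?case by simp
next
  case (snoc x w)
  have "nths w ({..<length (w @ [x])} - S) = nths w ({..<length w} - S)" by (rule nths_cong) auto
  thus ?case using snoc.IH[of S] by (auto simp: nths_snoc)
qed

lemma length_le_wdeg: "\<forall>b. deg b \<noteq> 0 \<Longrightarrow> length w \<le> wdeg deg w"
proof (induction w)
  case Nil thus ?case by simp
next
  case (Cons a w)
  have "deg a \<noteq> 0" using Cons.prems by blast
  moreover have "length w \<le> wdeg deg w" using Cons by blast
  moreover have "length (a # w) = Suc (length w)" "wdeg deg (a # w) = deg a + wdeg deg w" by simp_all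
  ultimately show ?case by linarith
qed

lemma deg_le_wdeg: "b \<in> set w \<Longrightarrow> deg b \<le> wdeg deg w"
  by (induction w) auto

lemma finite_wdeg_eq:
  fixes deg :: "'b \<Rightarrow> nat"
  assumes fd: "\<forall>n. finite {b. deg b = n}" and v0: "\<forall>b. deg b \<noteq> 0"
  shows "finite {w. wdeg deg w = n}"
proof -
  have fA: "finite {b. deg b \<le> n}"
  proof -
    have "{b. deg b \<le> n} = (\<Union>k\<le>n. {b. deg b = k})" by auto
    thus ?thesis using fd by simp
  qed
  have "{w. wdeg deg w = n} \<subseteq> {w. set w \<subseteq> {b. deg b \<le> n} \<and> length w \<le> n}"
  proof
    fix w :: "'b list" assume "w \<in> {w. wdeg deg w = n}"
    hence wn: "wdeg deg w = n" by simp
    show "w \<in> {w. set w \<subseteq> {b. deg b \<le> n} \<and> length w \<le> n}"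
      using deg_le_wdeg[of _ w deg] length_le_wdeg[OF v0, of w] wn by auto
  qed
  moreover have "finite {w. set w \<subseteq> {b. deg b \<le> n} \<and> length w \<le> n}"
    by (rule finite_lists_length_le[OF fA])
  ultimately show ?thesis by (rule finite_subset)
qed

lemma wdeg_eq_0_imp_Nil: "\<forall>b. deg b \<noteq> 0 \<Longrightarrow> wdeg deg w = 0 \<Longrightarrow> w = []"
proof (cases w)
  case (Cons a v)
  assume V: "\<forall>b. deg b \<noteq> 0" and W: "wdeg deg w = 0"
  have "deg a \<noteq> 0" using V by blast
  moreover have "deg a + wdeg deg v = 0" using W Cons by simp
  ultimately show ?thesis by simp
qed simp

lemma tv_mult_in_tv_grade:
  fixes f g :: "'b list \<Rightarrow> 'k::field"
  assumes f: "f \<in> tv_grade deg n" and g: "g \<in> tv_grade deg k"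
  shows "tv_mult f g \<in> tv_grade deg (n + k)"
  unfolding tv_grade_def
proof (intro CollectI conjI allI impI)
  show "fin (tv_mult f g)" using f g by (simp add: tv_grade_def)
  fix w assume "tv_mult f g w \<noteq> 0"
  then obtain u v where "u \<in> spt f" "v \<in> spt g" "w = u @ v"
    using spt_tv_multD[of f g w] f g by (auto simp: tv_grade_def spt_def)
  then show "wdeg deg w = n + k" using f g by (simp add: tv_grade_def spt_def)
qed

lemma tv_unit_in_tv_grade: "(tv_unit :: 'b list \<Rightarrow> 'k::field) \<in> tv_grade deg 0"
  by (auto simp: tv_grade_def tv_unit_def) (auto simp: dl_def split: if_splits)

lemma wdeg_spt_tv_cop:
  fixes f :: "'b list \<Rightarrow> 'k::field"
  assumes f: "f \<in> tv_grade deg n" and uv: "tv_cop f (u, v) \<noteq> 0"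
  shows "wdeg deg u + wdeg deg v = n"
proof -
  from uv have "(\<Sum>w\<in>spt f. f w * tv_cop_w w (u, v)) \<noteq> 0"
    by (simp add: tv_cop_def lext_def)
  then obtain w where w: "w \<in> spt f" "f w * tv_cop_w w (u, v) \<noteq> (0::'k)"
    using sum.neutral[of "spt f" "\<lambda>w. f w * tv_cop_w w (u, v)"] by blast
  then have "(u, v) \<in> spt (tv_cop_w w :: _ \<Rightarrow> 'k)" by (simp add: spt_def)
  then obtain S where "u = nths w S" "v = nths w ({..<length w} - S)"
    using spt_tv_cop_w by blast
  then have "wdeg deg u + wdeg deg v = wdeg deg w" by (simp add: wdeg_nths)
  then show ?thesis using f w by (simp add: tv_grade_def spt_def)
qed

lemma tv_eps_tv_grade: "f \<in> tv_grade deg n \<Longrightarrow> n \<noteq> 0 \<Longrightarrow> tv_eps f = 0"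
  by (auto simp: tv_grade_def tv_eps_def)

lemma tv_grade_0_eq:
  fixes f :: "'b list \<Rightarrow> 'k::field"
  assumes V0_zero: "\<forall>b. deg b \<noteq> 0" and f: "f \<in> tv_grade deg 0"
  shows "f = (\<lambda>x. f [] * tv_unit x)"
proof
  fix x
  have "f x = 0" if "x \<noteq> []"
    using f that wdeg_eq_0_imp_Nil[OF V0_zero] by (auto simp: tv_grade_def)
  then show "f x = f [] * tv_unit x" by (cases "x = []") (simp_all add: tv_unit_def dl_def)
qed

lemma fin_structure_constants_if_graded:
  fixes m :: "'b \<Rightarrow> 'b \<Rightarrow> 'b \<Rightarrow> 'k::field"
  assumes fin_dim: "\<forall>n. finite {b. deg b = n}"
    and graded_prod: "\<forall>x y z. m x y z \<noteq> 0 \<longrightarrow> deg z = deg x + deg y"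
  shows "fin (m x y)"
proof -
  have "spt (m x y) \<subseteq> {z. deg z = deg x + deg y}" using graded_prod by (auto simp: spt_def)
  then show ?thesis using fin_dim by (auto simp: fin_def intro: finite_subset)
qed

context magmatic begin

lemma spt_tv_starD: "fin f \<Longrightarrow> fin g \<Longrightarrow> z \<in> spt (tv_star m f g) \<Longrightarrow> \<exists>u\<in>spt f. \<exists>w\<in>spt g. z \<in> spt (tv_wstar m u w)"
proof -
  assume f: "fin f" and g: "fin g" and z: "z \<in> spt (tv_star m f g)"
  with tv_star_eq[OF f g] obtain u where u: "u \<in> spt f" "z \<in> spt (lext (\<lambda>w. tv_wstar m u w) g)"
    by (auto dest: spt_lextD)
  then obtain w where "w \<in> spt g" "z \<in> spt (tv_wstar m u w)" by (auto dest: spt_lextD)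
  thus ?thesis using u by auto
qed

lemma wdeg_spt_tv_wl:
  assumes graded_prod: "\<forall>x y z. m x y z \<noteq> 0 \<longrightarrow> deg z = deg x + deg y"
    and z: "z \<in> spt (tv_wl m v y)"
  shows "wdeg deg z = wdeg deg v + deg y"
proof -
  from z have "(\<Sum>i<length v. if length z = length v \<and> take i z = take i v \<and> drop (Suc i) z = drop (Suc i) v
      then m (v ! i) y (z ! i) else 0) \<noteq> 0" by (simp add: spt_def tv_wl_def)
  then obtain i where i: "i < length v" "length z = length v" "take i z = take i v" "drop (Suc i) z = drop (Suc i) v"
      "m (v ! i) y (z ! i) \<noteq> 0"
    using sum.neutral[of "{..<length v}"] by (smt (verit, best) lessThan_iff)
  have dz: "deg (z ! i) = deg (v ! i) + deg y" using graded_prod i(5) by blast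
  have "z = take i z @ z ! i # drop (Suc i) z" by (rule id_take_nth_drop) (simp add: i)
  hence "wdeg deg z = wdeg deg (take i v) + deg (z ! i) + wdeg deg (drop (Suc i) v)"
    using i by (metis add.assoc wdeg_append wdeg_Cons)
  moreover have "v = take i v @ v ! i # drop (Suc i) v" by (rule id_take_nth_drop) (simp add: i)
  hence "wdeg deg v = wdeg deg (take i v) + deg (v ! i) + wdeg deg (drop (Suc i) v)"
    by (metis add.assoc wdeg_append wdeg_Cons)
  ultimately show ?thesis using dz by simp
qed

lemma wdeg_spt_tv_wstar:
  assumes graded_prod: "\<forall>x y z. m x y z \<noteq> 0 \<longrightarrow> deg z = deg x + deg y"
  shows "z \<in> spt (tv_wstar m u w) \<Longrightarrow> wdeg deg z = wdeg deg u + wdeg deg w"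
  using spt_tv_wstar_additive[of "wdeg deg" u w] wdeg_spt_tv_wl[OF graded_prod] by auto

lemma tv_star_in_tv_grade:
  assumes graded_prod: "\<forall>x y z. m x y z \<noteq> 0 \<longrightarrow> deg z = deg x + deg y"
    and f: "f \<in> tv_grade deg n" and g: "g \<in> tv_grade deg k"
  shows "tv_star m f g \<in> tv_grade deg (n + k)"
  unfolding tv_grade_def
proof (intro CollectI conjI allI impI)
  show "fin (tv_star m f g)" using f g by (simp add: tv_grade_def)
  fix w assume "tv_star m f g w \<noteq> 0"
  then obtain u v where "u \<in> spt f" "v \<in> spt g" "w \<in> spt (tv_wstar m u v)"
    using spt_tv_starD[of f g w] f g by (auto simp: tv_grade_def spt_def)
  then show "wdeg deg w = n + k"
    using f g wdeg_spt_tv_wstar[OF graded_prod] by (simp add: tv_grade_def spt_def)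
qed

lemma connected_graded_tensor_algebra:
  assumes fin_dim: "\<forall>n. finite {b. deg b = n}"
    and V0_zero: "\<forall>b. deg b \<noteq> 0"
    and graded_prod: "\<forall>x y z. m x y z \<noteq> 0 \<longrightarrow> deg z = deg x + deg y"
  shows "tv_connected_graded deg m"
  unfolding tv_connected_graded_def
proof (intro conjI allI impI)
  fix f g :: "'b list \<Rightarrow> 'k" and n k assume "f \<in> tv_grade deg n \<and> g \<in> tv_grade deg k"
  then show "tv_mult f g \<in> tv_grade deg (n + k)" "tv_star m f g \<in> tv_grade deg (n + k)"
    by (simp_all add: tv_mult_in_tv_grade tv_star_in_tv_grade[OF graded_prod])
qed (simp_all add: finite_wdeg_eq[OF fin_dim V0_zero] tv_unit_in_tv_grade wdeg_spt_tv_cop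
    tv_eps_tv_grade tv_grade_0_eq[OF V0_zero])

end

theorem proposition4p1:
  fixes deg :: "'b \<Rightarrow> nat" and m :: "'b \<Rightarrow> 'b \<Rightarrow> 'b \<Rightarrow> 'k::field"
  assumes fin_dim: "\<forall>n. finite {b. deg b = n}"
    and V0_zero: "\<forall>b. deg b \<noteq> 0"
    and graded_prod: "\<forall>x y z. m x y z \<noteq> 0 \<longrightarrow> deg z = deg x + deg y"
  shows "tv_right_post_hopf m \<and> tv_cocommutative TYPE('b) TYPE('k) \<and> tv_connected_graded deg m"
proof -
  interpret magmatic m
    by unfold_locales (rule fin_structure_constants_if_graded[OF fin_dim graded_prod])
  show ?thesis
    using right_post_hopf_tensor_algebra cocommutative_tensor_algebra
      connected_graded_tensor_algebra[OF fin_dim V0_zero graded_prod]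
    by blast
qed

end
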